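(* Consider the system $x(k+1)=Ax(k)+Bu(k)$ with $A\in\mathbb{R}^{n\times n}$, $B\in\mathbb{R}^{n\times m}$ and $(A,B)$ controllable. Let $\{u_i^{[0,T_i-1]},x_i^{[0,T_i-1]}\}_{i=1}^p$ be $p$ input-state trajectories of this system, let $L\ge1$, and let $\alpha_1,\dots,\alpha_p$ be any nonzero real weights (used in all matrices below). Call a pair $(\bar x^{[0,L-1]},\bar u^{[0,L-1]})$ an $L$-long input-state trajectory if $\bar x(k+1)=A\bar x(k)+B\bar u(k)$ for $k=0,\dots,L-2$; write $\bar x^{[0,L-1]}$, $\bar u^{[0,L-1]}$ also for the stacked column vectors. 1) If $T_1=\dots=T_p=T_0$ and $\{u_i^{[0,T_0-1]}\}_{i=1}^p$ are CCPE of order $L+n$, then for every $L$-long input-state trajectory there is a real vector $g$ with $\begin{bmatrix}\bar x^{[0,L-1]}\\ \bar u^{[0,L-1]}\end{bmatrix}=\begin{bmatrix}H_L^{cum}(\{x_i^{[0,T_0-1]}\}_{i=1}^p)\\ H_L^{cum}(\{u_i^{[0,T_0-1]}\}_{i=1}^p)\end{bmatrix}g$. 2) If $\{u_i^{[0,T_i-1]}\}_{i=1}^p$ are MCPE of order $L+n$, then for every $L$-long input-state trajectory there is a real vector $g$ with $\begin{bmatrix}\bar x^{[0,L-1]}\\ \bar u^{[0,L-1]}\end{bmatrix}=\begin{bmatrix}H_L^{mos}(\{x_i^{[0,T_i-1]}\}_{i=1}^p)\\ H_L^{mos}(\{u_i^{[0,T_i-1]}\}_{i=1}^p)\end{bmatrix}g$.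 3) If $T_1=\dots=T_{\bar p}=T_0$ and $\{u_i^{[0,T_i-1]}\}_{i=1}^p$ are HCPE of order $L+n$ (cumulative part $u_1,\dots,u_{\bar p}$), then for every $L$-long input-state trajectory there is a real vector $g$ with $\begin{bmatrix}\bar x^{[0,L-1]}\\ \bar u^{[0,L-1]}\end{bmatrix}=\begin{bmatrix}H_L^{hyb}(\{x_i^{[0,T_i-1]}\}_{i=1}^p)\\ H_L^{hyb}(\{u_i^{[0,T_i-1]}\}_{i=1}^p)\end{bmatrix}g$.
   Context: For a sequence $z^{[0,T-1]}$ with $z(k)\in\mathbb{R}^q$ and $L\le T$, $H_L(z^{[0,T-1]})\in\mathbb{R}^{qL\times(T-L+1)}$ is the block Hankel matrix with $(r,c)$ block entry $z(r+c)$. With nonzero weights $\alpha_i$: $H_L^{mos}(\{z_i\}_{i=1}^p)=[\alpha_1H_L(z_1)\ \cdots\ \alpha_pH_L(z_p)]$; for equal-length sequences $H_L^{cum}(\{z_i\}_{i=1}^p)=\sum_i\alpha_iH_L(z_i)$; $H_L^{hyb}(\{z_i\}_{i=1}^p)=[H_L^{cum}(\{z_i\}_{i=1}^{\bar p})\ \ H_L^{mos}(\{z_i\}_{i=\bar p+1}^p)]$ with $z_1,\dots,z_{\bar p}$ of equal length. Input signals $u_i\in\mathbb{R}^m$ are MCPE (resp. CCPE, HCPE) of order $K$ if $H_K^{mos}$ (resp. $H_K^{cum}$, $H_K^{hyb}$) of the input sequences has full row rank $mK$ for every choice of nonzero weights. *)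

theory Defs
  imports "Jordan_Normal_Form.DL_Rank"
begin

definition mat_rank :: "real mat \<Rightarrow> nat" where
  "mat_rank A = vec_space.rank (dim_row A) A"

definition hcat :: "real mat \<Rightarrow> real mat \<Rightarrow> real mat" where
  "hcat A B = mat (dim_row A) (dim_col A + dim_col B)
     (\<lambda>(i,j). if j < dim_col A then A $$ (i,j) else B $$ (i, j - dim_col A))"

fun hcat_list :: "nat \<Rightarrow> real mat list \<Rightarrow> real mat" where
  "hcat_list nr [] = 0\<^sub>m nr 0"
| "hcat_list nr (M # Ms) = hcat M (hcat_list nr Ms)"

definition controllable :: "real mat \<Rightarrow> real mat \<Rightarrow> bool" where
  "controllable A B \<longleftrightarrow>
     mat_rank (hcat_list (dim_row A) (map (\<lambda>k. A ^\<^sub>m k * B) [0..<dim_row A])) = dim_row A"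

text \<open>A signal z : nat => real vec, of dimension q, on [0,T-1].
  Block Hankel matrix H_L(z) of size qL x (T-L+1) with (r,c) block z(r+c).\<close>
definition hankel :: "nat \<Rightarrow> nat \<Rightarrow> nat \<Rightarrow> (nat \<Rightarrow> real vec) \<Rightarrow> real mat" where
  "hankel q L T z = mat (q * L) (T + 1 - L) (\<lambda>(r,c). z (r div q + c) $ (r mod q))"

definition hankel_mos :: "nat \<Rightarrow> nat \<Rightarrow> (nat \<Rightarrow> real) \<Rightarrow> (nat \<Rightarrow> nat) \<Rightarrow>
    (nat \<Rightarrow> nat \<Rightarrow> real vec) \<Rightarrow> nat list \<Rightarrow> real mat" where
  "hankel_mos q L \<alpha> T z is = hcat_list (q * L) (map (\<lambda>i. \<alpha> i \<cdot>\<^sub>m hankel q L (T i) (z i)) is)"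

definition hankel_cum :: "nat \<Rightarrow> nat \<Rightarrow> (nat \<Rightarrow> real) \<Rightarrow> nat \<Rightarrow>
    (nat \<Rightarrow> nat \<Rightarrow> real vec) \<Rightarrow> nat list \<Rightarrow> real mat" where
  "hankel_cum q L \<alpha> T0 z is = mat (q * L) (T0 + 1 - L)
     (\<lambda>(r,c). sum_list (map (\<lambda>i. \<alpha> i * hankel q L T0 (z i) $$ (r,c)) is))"

definition hankel_hyb :: "nat \<Rightarrow> nat \<Rightarrow> (nat \<Rightarrow> real) \<Rightarrow> nat \<Rightarrow> (nat \<Rightarrow> nat) \<Rightarrow>
    (nat \<Rightarrow> nat \<Rightarrow> real vec) \<Rightarrow> nat \<Rightarrow> nat \<Rightarrow> real mat" where
  "hankel_hyb q L \<alpha> T0 T z pb p =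
     hcat (hankel_cum q L \<alpha> T0 z [0..<pb]) (hankel_mos q L \<alpha> T z [pb..<p])"

definition MCPE :: "nat \<Rightarrow> nat \<Rightarrow> (nat \<Rightarrow> nat) \<Rightarrow> (nat \<Rightarrow> nat \<Rightarrow> real vec) \<Rightarrow> nat \<Rightarrow> bool" where
  "MCPE m K T u p \<longleftrightarrow> (\<forall>\<beta>. (\<forall>i<p. \<beta> i \<noteq> 0) \<longrightarrow>
      mat_rank (hankel_mos m K \<beta> T u [0..<p]) = m * K)"

definition CCPE :: "nat \<Rightarrow> nat \<Rightarrow> nat \<Rightarrow> (nat \<Rightarrow> nat \<Rightarrow> real vec) \<Rightarrow> nat \<Rightarrow> bool" where
  "CCPE m K T0 u p \<longleftrightarrow> (\<forall>\<beta>. (\<forall>i<p. \<beta> i \<noteq> 0) \<longrightarrow>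
      mat_rank (hankel_cum m K \<beta> T0 u [0..<p]) = m * K)"

definition HCPE :: "nat \<Rightarrow> nat \<Rightarrow> nat \<Rightarrow> (nat \<Rightarrow> nat) \<Rightarrow> (nat \<Rightarrow> nat \<Rightarrow> real vec) \<Rightarrow>
    nat \<Rightarrow> nat \<Rightarrow> bool" where
  "HCPE m K T0 T u pb p \<longleftrightarrow> (\<forall>\<beta>. (\<forall>i<p. \<beta> i \<noteq> 0) \<longrightarrow>
      mat_rank (hankel_hyb m K \<beta> T0 T u pb p) = m * K)"

definition is_traj :: "nat \<Rightarrow> nat \<Rightarrow> real mat \<Rightarrow> real mat \<Rightarrow> nat \<Rightarrow>
    (nat \<Rightarrow> real vec) \<Rightarrow> (nat \<Rightarrow> real vec) \<Rightarrow> bool" where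
  "is_traj n m A B T x u \<longleftrightarrow>
     (\<forall>k<T. x k \<in> carrier_vec n \<and> u k \<in> carrier_vec m) \<and>
     (\<forall>k. k + 1 < T \<longrightarrow> x (k + 1) = A *\<^sub>v x k + B *\<^sub>v u k)"

definition stack :: "nat \<Rightarrow> nat \<Rightarrow> (nat \<Rightarrow> real vec) \<Rightarrow> real vec" where
  "stack q L z = vec (q * L) (\<lambda>r. z (r div q) $ (r mod q))"

end

theory Submission
  imports Defs
begin

(*
  Absorbing the weights into the data, each of the three stacked matrices is a Hankel mosaic of a
  family of trajectories: the trajectories a_i (x_i, u_i) for the mosaic blocks, and the single
  trajectory sum_i a_i (x_i, u_i) for the cumulative block.  Its columns are the L-long windows of
  these trajectories.  An L-long trajectory is determined by its initial state and its inputs, so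
  it suffices that the vectors [x(c); u(c); ...; u(c+L-1)] of all windows span R^(n+mL), i.e. that
  a covector (xi, eta) annihilating all of them is zero.

  Variation of constants turns the relations for the windows starting at c + k (k <= n) into
  (xi^T A^k) x(c) + theta_k^T [u(c); ...; u(c+L+n-1)] = 0, where theta_k is eta shifted by k blocks
  and preceded by xi^T A^(k-1) B, ..., xi^T B.  A linear relation sum_{k<=K} a_k xi^T A^k = 0 with
  a_K <> 0 (there are n + 1 covectors in R^n) makes sum_k a_k theta_k annihilate every input window
  of length L + n, so it vanishes by persistency of excitation of order L + n.  Read as a linear
  recurrence with leading coefficient a_K, this forces eta = 0 and xi^T A^j B = 0 for j < K, hence
  for all j, and controllability gives xi = 0.
*)

lemma scalar_prod_self_eq_0:
  fixes z :: "real vec"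
  assumes "z \<in> carrier_vec N" and "z \<bullet> z = 0"
  shows "z = 0\<^sub>v N"
  using assms conjugate_square_eq_0_vec[of z N] by simp

lemma mult_mat_vec_zero: "M \<in> carrier_mat nr nc \<Longrightarrow> M *\<^sub>v 0\<^sub>v nc = 0\<^sub>v nr"
  by (intro eq_vecI) auto

lemma pow_mat_Suc_left:
  fixes A :: "'a :: semiring_1 mat"
  assumes A: "A \<in> carrier_mat n n"
  shows "A ^\<^sub>m Suc k = A * A ^\<^sub>m k"
proof (induction k)
  case 0
  show ?case
    using A by simp
next
  case (Suc k)
  have "A ^\<^sub>m Suc (Suc k) = (A * A ^\<^sub>m k) * A"
    using Suc by simp
  also have "\<dots> = A * A ^\<^sub>m Suc k"
    using assoc_mult_mat[OF A pow_carrier_mat[OF A] A] by simp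
  finally show ?case .
qed

lemma pow_mat_add:
  fixes A :: "'a :: semiring_1 mat"
  assumes A: "A \<in> carrier_mat n n"
  shows "A ^\<^sub>m (i + k) = A ^\<^sub>m i * A ^\<^sub>m k"
proof (induction k)
  case 0
  show ?case
    using A by simp
next
  case (Suc k)
  have "A ^\<^sub>m (i + Suc k) = (A ^\<^sub>m i * A ^\<^sub>m k) * A"
    using Suc by simp
  also have "\<dots> = A ^\<^sub>m i * A ^\<^sub>m Suc k"
    using assoc_mult_mat[OF pow_carrier_mat[OF A] pow_carrier_mat[OF A] A] by simp
  finally show ?case .
qed

lemma transpose_pow_mat:
  fixes A :: "'a :: comm_semiring_1 mat"
  assumes A: "A \<in> carrier_mat n n"
  shows "transpose_mat (A ^\<^sub>m k) = transpose_mat A ^\<^sub>m k"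
proof (induction k)
  case 0
  show ?case
    using A by simp
next
  case (Suc k)
  have "transpose_mat (A ^\<^sub>m Suc k) = transpose_mat A * transpose_mat A ^\<^sub>m k"
    using transpose_mult[OF pow_carrier_mat[OF A] A] Suc by simp
  also have "\<dots> = transpose_mat A ^\<^sub>m Suc k"
    using pow_mat_Suc_left[of "transpose_mat A" n] A by simp
  finally show ?case .
qed

lemma cols_hcat:
  assumes "dim_row M1 = dim_row M2"
  shows "cols (hcat M1 M2) = cols M1 @ cols M2"
proof (rule nth_equalityI)
  show "length (cols (hcat M1 M2)) = length (cols M1 @ cols M2)"
    by (simp add: hcat_def)
  fix j assume "j < length (cols (hcat M1 M2))"
  hence j: "j < dim_col M1 + dim_col M2"
    by (simp add: hcat_def)
  show "cols (hcat M1 M2) ! j = (cols M1 @ cols M2) ! j"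
    using j assms by (intro eq_vecI) (auto simp: hcat_def nth_append)
qed

lemma dim_row_hcat_list: "\<forall>M\<in>set Ms. dim_row M = nr \<Longrightarrow> dim_row (hcat_list nr Ms) = nr"
  by (induction Ms) (auto simp: hcat_def)

lemma cols_hcat_list:
  "\<forall>M\<in>set Ms. dim_row M = nr \<Longrightarrow> cols (hcat_list nr Ms) = concat (map cols Ms)"
proof (induction Ms)
  case Nil
  show ?case
    by (simp add: cols_def)
qed (auto simp: cols_hcat dim_row_hcat_list)

lemma hcat_empty_right: "dim_row M = nr \<Longrightarrow> hcat M (0\<^sub>m nr 0) = M"
  by (intro eq_matI) (auto simp: hcat_def)

lemma mat_rank_full_imp_surj:
  fixes M :: "real mat"
  assumes M: "M \<in> carrier_mat N K" and rank: "mat_rank M = N" and v: "v \<in> carrier_vec N"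
  shows "\<exists>g\<in>carrier_vec K. M *\<^sub>v g = v"
proof -
  interpret vs: vec_space "TYPE(real)" N .
  obtain S where S: "maximal S (\<lambda>T. T \<subseteq> set (cols M) \<and> vs.lin_indpt T)"
    using maximal_exists[of "\<lambda>T. T \<subseteq> set (cols M) \<and> vs.lin_indpt T" "card (set (cols M))" "{}"]
    by (meson List.finite_set card_mono empty_iff empty_subsetI vs.finite_lin_indpt2 rev_finite_subset)
  have S_cols: "S \<subseteq> set (cols M)" and S_indpt: "vs.lin_indpt S"
    using S unfolding maximal_def by auto
  have "card S = N"
    using vs.rank_card_indpt[OF M S] rank M unfolding mat_rank_def by auto
  moreover have "S \<subseteq> carrier_vec N"
    using S_cols M cols_dim by blast
  moreover have "finite S"
    using S_cols finite_subset by blast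
  ultimately have "vs.basis S"
    using S_indpt vs.dim_is_n by (intro vs.dim_li_is_basis) auto
  hence "carrier_vec N \<subseteq> vs.span (set (cols M))"
    using vs.span_is_monotone[OF S_cols] unfolding vs.basis_def by auto
  hence "v \<in> vs.col_space M"
    using v unfolding vs.col_space_def by auto
  thus ?thesis
    using vs.col_space_eq[OF M] M by auto
qed

lemma mat_rank_full_imp_left_kernel_trivial:
  fixes M :: "real mat"
  assumes M: "M \<in> carrier_mat N K" and rank: "mat_rank M = N" and z: "z \<in> carrier_vec N"
    and orth: "\<forall>j<K. col M j \<bullet> z = 0"
  shows "z = 0\<^sub>v N"
proof -
  obtain g where g: "g \<in> carrier_vec K" "M *\<^sub>v g = z"
    using mat_rank_full_imp_surj[OF M rank z] by blast
  have MTz: "transpose_mat M *\<^sub>v z = 0\<^sub>v K"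
    using orth M z by (intro eq_vecI) auto
  have "z \<bullet> z = (transpose_mat M *\<^sub>v z) \<bullet> g"
    using transpose_vec_mult_scalar[OF M g(1) z] g(2) by simp
  also have "\<dots> = 0"
    unfolding MTz using g(1) by simp
  finally show ?thesis
    using scalar_prod_self_eq_0 z by blast
qed

lemma left_kernel_trivial_imp_surj:
  fixes M :: "real mat"
  assumes M: "M \<in> carrier_mat N K"
    and kernel: "\<forall>z\<in>carrier_vec N. (\<forall>j<K. col M j \<bullet> z = 0) \<longrightarrow> z = 0\<^sub>v N"
    and v: "v \<in> carrier_vec N"
  shows "\<exists>g\<in>carrier_vec K. M *\<^sub>v g = v"
proof -
  define G where "G = M * transpose_mat M"
  have MT: "transpose_mat M \<in> carrier_mat K N"
    using M by simp
  have G: "G \<in> carrier_mat N N"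
    unfolding G_def using M by simp
  have "det G \<noteq> 0"
  proof
    assume "det G = 0"
    then obtain z where z: "z \<in> carrier_vec N" "z \<noteq> 0\<^sub>v N" "G *\<^sub>v z = 0\<^sub>v N"
      using det_0_iff_vec_prod_zero[OF G] by blast
    define w where "w = transpose_mat M *\<^sub>v z"
    have w: "w \<in> carrier_vec K"
      unfolding w_def using MT z(1) by simp
    have "w \<bullet> w = z \<bullet> (G *\<^sub>v z)"
      using transpose_vec_mult_scalar[OF M w z(1)] assoc_mult_mat_vec[OF M MT z(1)]
      unfolding w_def G_def by simp
    hence "w = 0\<^sub>v K"
      using z(1,3) scalar_prod_self_eq_0[OF w] by simp
    hence "\<forall>j<K. col M j \<bullet> z = 0"
      unfolding w_def using M by (metis carrier_matD(2) col_transpose index_mult_mat_vec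
          index_transpose_mat(2) index_zero_vec(1) row_transpose)
    thus False
      using kernel z by blast
  qed
  hence "mat_rank G = N"
    using vec_space.det_rank_iff[OF G] G unfolding mat_rank_def by simp
  then obtain h where h: "h \<in> carrier_vec N" "G *\<^sub>v h = v"
    using mat_rank_full_imp_surj[OF G _ v] by blast
  show ?thesis
  proof
    show "transpose_mat M *\<^sub>v h \<in> carrier_vec K"
      using MT h(1) by simp
    show "M *\<^sub>v (transpose_mat M *\<^sub>v h) = v"
      using assoc_mult_mat_vec[OF M MT h(1)] h(2) unfolding G_def by simp
  qed
qed

section \<open>Indexed linear combinations and stacked vectors\<close>

definition vec_lincomb :: "nat \<Rightarrow> ('j \<Rightarrow> real) \<Rightarrow> ('j \<Rightarrow> real vec) \<Rightarrow> 'j set \<Rightarrow> real vec" where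
  "vec_lincomb n c v J = vec n (\<lambda>i. \<Sum>j\<in>J. c j * v j $ i)"

lemma vec_lincomb_carrier [simp]: "vec_lincomb n c v J \<in> carrier_vec n"
  and dim_vec_lincomb [simp]: "dim_vec (vec_lincomb n c v J) = n"
  and index_vec_lincomb [simp]: "i < n \<Longrightarrow> vec_lincomb n c v J $ i = (\<Sum>j\<in>J. c j * v j $ i)"
  unfolding vec_lincomb_def by auto

lemma vec_lincomb_cong:
  "(\<And>j. j \<in> J \<Longrightarrow> v j = v' j) \<Longrightarrow> vec_lincomb n c v J = vec_lincomb n c v' J"
  unfolding vec_lincomb_def by (intro arg_cong[where f = "vec n"] ext sum.cong) auto

lemma scalar_prod_vec_lincomb:
  assumes "w \<in> carrier_vec n"
  shows "vec_lincomb n c v J \<bullet> w = (\<Sum>j\<in>J. c j * (v j \<bullet> w))"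
proof -
  have "vec_lincomb n c v J \<bullet> w = (\<Sum>i<n. \<Sum>j\<in>J. c j * (v j $ i * w $ i))"
    using assms by (simp add: scalar_prod_def atLeast0LessThan sum_distrib_right mult.assoc)
  also have "\<dots> = (\<Sum>j\<in>J. c j * (v j \<bullet> w))"
    using assms by (subst sum.swap) (simp add: scalar_prod_def atLeast0LessThan sum_distrib_left)
  finally show ?thesis .
qed

lemma mult_mat_vec_lincomb:
  assumes M: "M \<in> carrier_mat nr n" and v: "\<forall>j\<in>J. v j \<in> carrier_vec n"
  shows "M *\<^sub>v vec_lincomb n c v J = vec_lincomb nr c (\<lambda>j. M *\<^sub>v v j) J"
proof (rule eq_vecI)
  fix i assume "i < dim_vec (vec_lincomb nr c (\<lambda>j. M *\<^sub>v v j) J)"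
  hence i: "i < nr" by simp
  have row: "row M i \<in> carrier_vec n"
    using M i by simp
  have "(M *\<^sub>v vec_lincomb n c v J) $ i = vec_lincomb n c v J \<bullet> row M i"
    using M i comm_scalar_prod[OF row vec_lincomb_carrier] by simp
  also have "\<dots> = (\<Sum>j\<in>J. c j * (row M i \<bullet> v j))"
    unfolding scalar_prod_vec_lincomb[OF row] using v row by (simp add: comm_scalar_prod[of _ n])
  finally show "(M *\<^sub>v vec_lincomb n c v J) $ i = vec_lincomb nr c (\<lambda>j. M *\<^sub>v v j) J $ i"
    using M i by simp
qed (use M in simp)

lemma vec_lincomb_add:
  assumes "\<forall>j\<in>J. v j \<in> carrier_vec n \<and> w j \<in> carrier_vec n"
  shows "vec_lincomb n c (\<lambda>j. v j + w j) J = vec_lincomb n c v J + vec_lincomb n c w J"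
proof (rule eq_vecI)
  fix i assume "i < dim_vec (vec_lincomb n c v J + vec_lincomb n c w J)"
  hence i: "i < n"
    by simp
  have "(v j + w j) $ i = v j $ i + w j $ i" if "j \<in> J" for j
    using assms that i by auto
  thus "vec_lincomb n c (\<lambda>j. v j + w j) J $ i = (vec_lincomb n c v J + vec_lincomb n c w J) $ i"
    using i by (simp add: distrib_left sum.distrib)
qed simp

lemma vec_lincomb_append:
  assumes "\<forall>j\<in>J. v j \<in> carrier_vec n1 \<and> w j \<in> carrier_vec n2"
  shows "vec_lincomb (n1 + n2) c (\<lambda>j. v j @\<^sub>v w j) J = vec_lincomb n1 c v J @\<^sub>v vec_lincomb n2 c w J"
proof (rule eq_vecI)
  fix i assume "i < dim_vec (vec_lincomb n1 c v J @\<^sub>v vec_lincomb n2 c w J)"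
  hence i: "i < n1 + n2"
    by simp
  have "(v j @\<^sub>v w j) $ i = (if i < n1 then v j $ i else w j $ (i - n1))" if "j \<in> J" for j
    using assms that i by auto
  thus "vec_lincomb (n1 + n2) c (\<lambda>j. v j @\<^sub>v w j) J $ i = (vec_lincomb n1 c v J @\<^sub>v vec_lincomb n2 c w J) $ i"
    using i by simp
qed simp

lemma mult_mat_vec_eq_lincomb_cols:
  assumes "M \<in> carrier_mat nr K" and "g \<in> carrier_vec K"
  shows "M *\<^sub>v g = vec_lincomb nr (\<lambda>j. g $ j) (col M) {..<K}"
  using assms by (intro eq_vecI) (auto simp: scalar_prod_def atLeast0LessThan mult.commute)

lemma ex_linear_relation:
  fixes ys :: "nat \<Rightarrow> real vec"
  shows "\<exists>a K. K \<le> N \<and> a K \<noteq> 0 \<and> vec_lincomb N a ys {..K} = 0\<^sub>v N"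
proof -
  define C where
    "C = mat\<^sub>r (Suc N) (Suc N) (\<lambda>i. if i = N then 0\<^sub>v (Suc N) else vec (Suc N) (\<lambda>k. ys k $ i))"
  have C: "C \<in> carrier_mat (Suc N) (Suc N)"
    unfolding C_def by simp
  have "det C = 0"
    unfolding C_def by (rule det_row_0) auto
  then obtain v where v: "v \<in> carrier_vec (Suc N)" "v \<noteq> 0\<^sub>v (Suc N)" "C *\<^sub>v v = 0\<^sub>v (Suc N)"
    using det_0_iff_vec_prod_zero[OF C] by blast
  have "\<exists>k\<le>N. v $ k \<noteq> 0"
    using v(1,2) by (metis eq_vecI carrier_vecD index_zero_vec less_Suc_eq_le)
  define K where "K = (GREATEST k. k \<le> N \<and> v $ k \<noteq> 0)"
  have K: "K \<le> N" "v $ K \<noteq> 0"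
    using GreatestI_nat[of "\<lambda>k. k \<le> N \<and> v $ k \<noteq> 0"] \<open>\<exists>k\<le>N. v $ k \<noteq> 0\<close>
    unfolding K_def by blast+
  have above_K: "v $ k = 0" if "K < k" "k \<le> N" for k
    using Greatest_le_nat[of "\<lambda>k. k \<le> N \<and> v $ k \<noteq> 0" k N] that unfolding K_def by fastforce
  have "vec_lincomb N (\<lambda>k. v $ k) ys {..K} = 0\<^sub>v N"
  proof (rule eq_vecI)
    fix i assume "i < dim_vec (0\<^sub>v N)"
    hence i: "i < N"
      by simp
    have "(\<Sum>k\<le>K. v $ k * ys k $ i) = (\<Sum>k\<le>N. v $ k * ys k $ i)"
      using above_K K(1) by (intro sum.mono_neutral_left) auto
    also have "\<dots> = (C *\<^sub>v v) $ i"
      using i v(1) unfolding C_def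
      by (simp add: scalar_prod_def atLeast0LessThan lessThan_Suc_atMost mult.commute)
    also have "\<dots> = 0"
      using v(3) i by simp
    finally show "vec_lincomb N (\<lambda>k. v $ k) ys {..K} $ i = 0\<^sub>v N $ i"
      using i by simp
  qed simp
  thus ?thesis
    using K by blast
qed

lemma index_stack [simp]: "r < q * L \<Longrightarrow> stack q L z $ r = z (r div q) $ (r mod q)"
  and stack_carrier [simp]: "stack q L z \<in> carrier_vec (q * L)"
  and dim_stack [simp]: "dim_vec (stack q L z) = q * L"
  unfolding stack_def by auto

lemma div_mod_less_mult:
  fixes r q L :: nat
  assumes "r < q * L"
  shows "r div q < L" and "r mod q < q"
proof -
  show "r div q < L"
    using assms by (metis less_mult_imp_div_less mult.commute)
  have "q \<noteq> 0"
    using assms by (cases q) auto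
  thus "r mod q < q"
    by simp
qed

lemma block_index_less:
  fixes l b q L :: nat
  assumes "l < L" and "b < q"
  shows "l * q + b < q * L"
proof -
  have "l * q + b < Suc l * q"
    using assms(2) by simp
  also have "\<dots> \<le> L * q"
    using assms(1) by (intro mult_le_mono1) simp
  finally show ?thesis
    by (simp add: mult.commute)
qed

lemma block_index_div_mod:
  fixes l b q :: nat
  assumes "b < q"
  shows "(l * q + b) div q = l" and "(l * q + b) mod q = b"
  using assms by auto

lemma stack_cong: "(\<And>k. k < L \<Longrightarrow> z k = z' k) \<Longrightarrow> stack q L z = stack q L z'"
  by (intro eq_vecI) (auto dest: div_mod_less_mult)

lemma stack_inject:
  assumes eq: "stack q L z = stack q L z'"
    and z: "\<forall>k<L. z k \<in> carrier_vec q" and z': "\<forall>k<L. z' k \<in> carrier_vec q"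
    and k: "k < L"
  shows "z k = z' k"
proof -
  have zk: "z k \<in> carrier_vec q" "z' k \<in> carrier_vec q"
    using z z' k by auto
  show ?thesis
  proof (rule eq_vecI)
    fix b assume "b < dim_vec (z' k)"
    hence b: "b < q"
      using zk(2) by simp
    have "z k $ b = stack q L z $ (k * q + b)" "z' k $ b = stack q L z' $ (k * q + b)"
      using index_stack[OF block_index_less[OF k b]] block_index_div_mod[OF b] by simp_all
    thus "z k $ b = z' k $ b"
      using eq by simp
  qed (use zk in simp)
qed

lemma stack_blocks:
  assumes "\<eta> \<in> carrier_vec (q * L)"
  shows "stack q L (\<lambda>l. vec q (\<lambda>b. \<eta> $ (l * q + b))) = \<eta>"
  using assms by (intro eq_vecI) (auto dest: div_mod_less_mult simp: mult.commute)

lemma stack_zero: "stack q L (\<lambda>_. 0\<^sub>v q) = 0\<^sub>v (q * L)"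
  by (intro eq_vecI) (auto dest: div_mod_less_mult)

lemma sum_lessThan_add: "(\<Sum>r<a + b. f r) = (\<Sum>r<a. f r) + (\<Sum>r<b. f (a + r))"
  for a b :: nat
  by (induction b) (auto simp: add.assoc)

lemma sum_lessThan_blocks: "(\<Sum>r<q * L. f r) = (\<Sum>l<L. \<Sum>b<q. f (l * q + b))"
  for q L :: nat
proof (induction L)
  case (Suc L)
  have "(\<Sum>r<q * Suc L. f r) = (\<Sum>r<q * L. f r) + (\<Sum>b<q. f (q * L + b))"
    using sum_lessThan_add[of f "q * L" q] by (simp add: add.commute)
  thus ?case
    using Suc by (simp add: mult.commute)
qed simp

lemma stack_scalar_prod:
  assumes "\<forall>l<L. w l \<in> carrier_vec q"
  shows "stack q L v \<bullet> stack q L w = (\<Sum>l<L. v l \<bullet> w l)"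
proof -
  have "stack q L v \<bullet> stack q L w = (\<Sum>r<q * L. stack q L v $ r * stack q L w $ r)"
    by (simp add: scalar_prod_def atLeast0LessThan)
  also have "\<dots> = (\<Sum>l<L. \<Sum>b<q. v l $ b * w l $ b)"
    unfolding sum_lessThan_blocks using block_index_less by (intro sum.cong refl) auto
  also have "\<dots> = (\<Sum>l<L. v l \<bullet> w l)"
    using assms by (intro sum.cong refl) (auto simp: scalar_prod_def atLeast0LessThan)
  finally show ?thesis .
qed

lemma vec_lincomb_stack:
  "vec_lincomb (q * L) c (\<lambda>j. stack q L (zs j)) J = stack q L (\<lambda>k. vec_lincomb q c (\<lambda>j. zs j k) J)"
  by (intro eq_vecI) (auto dest: div_mod_less_mult)

lemma mult_mat_vec_stack_cols:
  assumes M: "M \<in> carrier_mat (q * L) K" and g: "g \<in> carrier_vec K"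
    and cols: "\<And>j. j < K \<Longrightarrow> col M j = stack q L (zs j)"
  shows "M *\<^sub>v g = stack q L (\<lambda>k. vec_lincomb q (\<lambda>j. g $ j) (\<lambda>j. zs j k) {..<K})"
proof -
  have "M *\<^sub>v g = vec_lincomb (q * L) (\<lambda>j. g $ j) (\<lambda>j. stack q L (zs j)) {..<K}"
    unfolding mult_mat_vec_eq_lincomb_cols[OF M g] using cols by (intro vec_lincomb_cong) simp
  thus ?thesis
    unfolding vec_lincomb_stack .
qed

section \<open>Linear recurrences\<close>

lemma sum_atMost_split_top: "(\<Sum>k\<le>K. f k) = f K + (\<Sum>k<K. f k)"
  for K :: nat
  using sum.lessThan_Suc[of f K] by (simp add: lessThan_Suc_atMost add.commute)

lemma linear_recurrence_backward_eq_0: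
  fixes a \<sigma> :: "nat \<Rightarrow> 'a :: field"
  assumes lead: "a K \<noteq> 0" and tail: "\<forall>s\<ge>N. \<sigma> s = 0"
    and recurrence: "\<forall>l<N. (\<Sum>k\<le>K. a k * \<sigma> (l + K - k)) = 0"
  shows "\<sigma> s = 0"
proof (induction "N - s" arbitrary: s rule: less_induct)
  case less
  show ?case
  proof (cases "s < N")
    case True
    have "(\<Sum>k<K. a k * \<sigma> (s + K - k)) = 0"
    proof (intro sum.neutral ballI)
      fix k assume "k \<in> {..<K}"
      hence "N - (s + K - k) < N - s"
        using True by auto
      thus "a k * \<sigma> (s + K - k) = 0"
        using less by simp
    qed
    hence "a K * \<sigma> s = 0"
      using recurrence True sum_atMost_split_top[of "\<lambda>k. a k * \<sigma> (s + K - k)" K] by simp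
    thus ?thesis
      using lead by simp
  qed (use tail in simp)
qed

lemma linear_recurrence_forward_eq_0:
  fixes a y :: "nat \<Rightarrow> 'a :: field"
  assumes lead: "a K \<noteq> 0" and init: "\<forall>j<K. y j = 0"
    and recurrence: "\<forall>i. (\<Sum>k\<le>K. a k * y (k + i)) = 0"
  shows "y j = 0"
proof (induction j rule: less_induct)
  case (less j)
  show ?case
  proof (cases "j < K")
    case False
    then obtain i where j: "j = K + i"
      by (metis le_add_diff_inverse not_less)
    have "(\<Sum>k<K. a k * y (k + i)) = 0"
      using less j by (intro sum.neutral) auto
    hence "a K * y j = 0"
      using recurrence j sum_atMost_split_top[of "\<lambda>k. a k * y (k + i)" K] by simp
    thus ?thesis
      using lead by simp
  qed (use init in simp)
qed

lemma linear_recurrence_backward_vec_eq_0: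
  fixes a :: "nat \<Rightarrow> real" and \<sigma> :: "nat \<Rightarrow> real vec"
  assumes lead: "a K \<noteq> 0" and carrier: "\<forall>s. \<sigma> s \<in> carrier_vec m"
    and tail: "\<forall>s\<ge>N. \<sigma> s = 0\<^sub>v m"
    and recurrence: "\<forall>l<N. vec_lincomb m a (\<lambda>k. \<sigma> (l + K - k)) {..K} = 0\<^sub>v m"
  shows "\<sigma> s = 0\<^sub>v m"
proof (rule eq_vecI)
  fix b assume "b < dim_vec (0\<^sub>v m)"
  hence b: "b < m"
    by simp
  have "\<sigma> s $ b = 0"
  proof (rule linear_recurrence_backward_eq_0[of a K N "\<lambda>s. \<sigma> s $ b", OF lead])
    show "\<forall>s\<ge>N. \<sigma> s $ b = 0"
      using tail b by simp
    show "\<forall>l<N. (\<Sum>k\<le>K. a k * \<sigma> (l + K - k) $ b) = 0"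
      using recurrence b by (metis index_vec_lincomb index_zero_vec(1))
  qed
  thus "\<sigma> s $ b = 0\<^sub>v m $ b"
    using b by simp
qed (use carrier in simp)

lemma linear_recurrence_forward_vec_eq_0:
  fixes a :: "nat \<Rightarrow> real" and y :: "nat \<Rightarrow> real vec"
  assumes lead: "a K \<noteq> 0" and carrier: "\<forall>j. y j \<in> carrier_vec m"
    and init: "\<forall>j<K. y j = 0\<^sub>v m"
    and recurrence: "\<forall>i. vec_lincomb m a (\<lambda>k. y (k + i)) {..K} = 0\<^sub>v m"
  shows "y j = 0\<^sub>v m"
proof (rule eq_vecI)
  fix b assume "b < dim_vec (0\<^sub>v m)"
  hence b: "b < m"
    by simp
  have "y j $ b = 0"
  proof (rule linear_recurrence_forward_eq_0[of a K "\<lambda>j. y j $ b" j, OF lead])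
    show "\<forall>j<K. y j $ b = 0"
      using init b by simp
    show "\<forall>i. (\<Sum>k\<le>K. a k * y (k + i) $ b) = 0"
      using recurrence b by (metis index_vec_lincomb index_zero_vec(1))
  qed
  thus "y j $ b = 0\<^sub>v m $ b"
    using b by simp
qed (use carrier in simp)

section \<open>Trajectories\<close>

lemma is_traj_carrier:
  assumes "is_traj n m A B T x u" and "k < T"
  shows "x k \<in> carrier_vec n" and "u k \<in> carrier_vec m"
  using assms unfolding is_traj_def by auto

lemma is_traj_shift:
  assumes "is_traj n m A B T x u" and "c + L \<le> T"
  shows "is_traj n m A B L (\<lambda>k. x (c + k)) (\<lambda>k. u (c + k))"
  unfolding is_traj_def
proof (intro conjI allI impI)
  fix k assume "k + 1 < L"
  hence "(c + k) + 1 < T"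
    using assms(2) by simp
  hence "x ((c + k) + 1) = A *\<^sub>v x (c + k) + B *\<^sub>v u (c + k)"
    using assms(1) unfolding is_traj_def by blast
  thus "x (c + (k + 1)) = A *\<^sub>v x (c + k) + B *\<^sub>v u (c + k)"
    by (simp add: add.assoc)
qed (use assms in \<open>auto simp: is_traj_def\<close>)

lemma is_traj_smult:
  assumes A: "A \<in> carrier_mat n n" and B: "B \<in> carrier_mat n m" and traj: "is_traj n m A B T x u"
  shows "is_traj n m A B T (\<lambda>k. a \<cdot>\<^sub>v x k) (\<lambda>k. a \<cdot>\<^sub>v u k)"
  unfolding is_traj_def
proof (intro conjI allI impI)
  fix k assume k: "k + 1 < T"
  have x: "x k \<in> carrier_vec n" and u: "u k \<in> carrier_vec m"
    using traj k unfolding is_traj_def by auto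
  have "a \<cdot>\<^sub>v x (k + 1) = a \<cdot>\<^sub>v (A *\<^sub>v x k) + a \<cdot>\<^sub>v (B *\<^sub>v u k)"
    using traj k smult_add_distrib_vec[of "A *\<^sub>v x k" n "B *\<^sub>v u k" a] A B x u
    unfolding is_traj_def by simp
  thus "a \<cdot>\<^sub>v x (k + 1) = A *\<^sub>v (a \<cdot>\<^sub>v x k) + B *\<^sub>v (a \<cdot>\<^sub>v u k)"
    using mult_mat_vec[OF A x] mult_mat_vec[OF B u] by simp
qed (use traj in \<open>auto simp: is_traj_def\<close>)

lemma is_traj_lincomb:
  assumes A: "A \<in> carrier_mat n n" and B: "B \<in> carrier_mat n m"
    and trajs: "\<forall>j\<in>J. is_traj n m A B T (xs j) (us j)"
  shows "is_traj n m A B T (\<lambda>k. vec_lincomb n c (\<lambda>j. xs j k) J) (\<lambda>k. vec_lincomb m c (\<lambda>j. us j k) J)"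
  unfolding is_traj_def
proof (intro conjI allI impI)
  fix k assume k: "k + 1 < T"
  have carrier: "\<forall>j\<in>J. xs j k \<in> carrier_vec n \<and> us j k \<in> carrier_vec m"
    using trajs k unfolding is_traj_def by auto
  have step: "\<forall>j\<in>J. xs j (k + 1) = A *\<^sub>v xs j k + B *\<^sub>v us j k"
    using trajs k unfolding is_traj_def by blast
  have "vec_lincomb n c (\<lambda>j. xs j (k + 1)) J = vec_lincomb n c (\<lambda>j. A *\<^sub>v xs j k + B *\<^sub>v us j k) J"
    unfolding vec_lincomb_def using step by (intro arg_cong[where f = "vec n"] ext sum.cong) auto
  also have "\<dots> = vec_lincomb n c (\<lambda>j. A *\<^sub>v xs j k) J + vec_lincomb n c (\<lambda>j. B *\<^sub>v us j k) J"
    using carrier A B by (intro vec_lincomb_add) auto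
  also have "\<dots> = A *\<^sub>v vec_lincomb n c (\<lambda>j. xs j k) J + B *\<^sub>v vec_lincomb m c (\<lambda>j. us j k) J"
    using carrier by (simp add: mult_mat_vec_lincomb[OF A] mult_mat_vec_lincomb[OF B])
  finally show "vec_lincomb n c (\<lambda>j. xs j (k + 1)) J =
      A *\<^sub>v vec_lincomb n c (\<lambda>j. xs j k) J + B *\<^sub>v vec_lincomb m c (\<lambda>j. us j k) J" .
qed auto

lemma is_traj_unique:
  assumes "is_traj n m A B L x u" and "is_traj n m A B L x' u'"
    and "x 0 = x' 0" and "\<forall>k<L. u k = u' k"
  shows "k < L \<Longrightarrow> x k = x' k"
proof (induction k)
  case (Suc k)
  hence "k + 1 < L" and "x k = x' k" and "u k = u' k"
    using assms(4) by auto
  thus ?case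
    using assms(1,2) unfolding is_traj_def by simp
qed (use assms in simp)

lemma lincomb_traj_eq:
  assumes A: "A \<in> carrier_mat n n" and B: "B \<in> carrier_mat n m"
    and trajs: "\<forall>j\<in>J. is_traj n m A B L (xs j) (us j)" and traj: "is_traj n m A B L x u"
    and init: "vec_lincomb n c (\<lambda>j. xs j 0) J = x 0"
    and inputs: "\<forall>k<L. vec_lincomb m c (\<lambda>j. us j k) J = u k"
  shows "\<forall>k<L. vec_lincomb n c (\<lambda>j. xs j k) J = x k"
  using is_traj_unique[OF is_traj_lincomb[OF A B trajs] traj init inputs] by blast

lemma variation_of_constants:
  assumes A: "A \<in> carrier_mat n n" and B: "B \<in> carrier_mat n m"
    and traj: "is_traj n m A B T x u"
  shows "k < T \<Longrightarrow> \<xi> \<in> carrier_vec n \<Longrightarrow> \<xi> \<bullet> x k =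
    (transpose_mat A ^\<^sub>m k *\<^sub>v \<xi>) \<bullet> x 0 +
    (\<Sum>l<k. (transpose_mat B *\<^sub>v (transpose_mat A ^\<^sub>m (k - 1 - l) *\<^sub>v \<xi>)) \<bullet> u l)"
proof (induction k arbitrary: \<xi>)
  case 0
  thus ?case
    using A by simp
next
  case (Suc k)
  define \<xi>' where "\<xi>' = transpose_mat A *\<^sub>v \<xi>"
  have \<xi>': "\<xi>' \<in> carrier_vec n"
    unfolding \<xi>'_def using A Suc.prems(2) by simp
  have x: "x k \<in> carrier_vec n" and u: "u k \<in> carrier_vec m"
    using traj Suc.prems unfolding is_traj_def by auto
  have step: "x (Suc k) = A *\<^sub>v x k + B *\<^sub>v u k"
    using traj Suc.prems unfolding is_traj_def by (metis Suc_eq_plus1)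
  have power: "transpose_mat A ^\<^sub>m j *\<^sub>v \<xi>' = transpose_mat A ^\<^sub>m Suc j *\<^sub>v \<xi>" for j
    unfolding \<xi>'_def using A Suc.prems(2)
    by (simp add: assoc_mult_mat_vec[of _ n n _ n])
  have "\<xi> \<bullet> x (Suc k) = \<xi>' \<bullet> x k + (transpose_mat B *\<^sub>v \<xi>) \<bullet> u k"
    unfolding step \<xi>'_def using A B x u Suc.prems(2)
    by (simp add: scalar_prod_add_distrib[of _ n] transpose_vec_mult_scalar)
  also have "\<xi>' \<bullet> x k = (transpose_mat A ^\<^sub>m Suc k *\<^sub>v \<xi>) \<bullet> x 0 +
      (\<Sum>l<k. (transpose_mat B *\<^sub>v (transpose_mat A ^\<^sub>m (Suc k - 1 - l) *\<^sub>v \<xi>)) \<bullet> u l)"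
    using Suc.IH[OF _ \<xi>'] Suc.prems(1) unfolding power by (simp add: Suc_diff_Suc)
  finally show ?case
    using A Suc.prems(2) by simp
qed

lemma controllable_covector_eq_0:
  assumes A: "A \<in> carrier_mat n n" and B: "B \<in> carrier_mat n m" and ctrl: "controllable A B"
    and \<xi>: "\<xi> \<in> carrier_vec n"
    and unobservable: "\<forall>j. transpose_mat B *\<^sub>v (transpose_mat A ^\<^sub>m j *\<^sub>v \<xi>) = 0\<^sub>v m"
  shows "\<xi> = 0\<^sub>v n"
proof -
  define Ms where "Ms = map (\<lambda>k. A ^\<^sub>m k * B) [0..<n]"
  define C where "C = hcat_list n Ms"
  have rows: "\<forall>M\<in>set Ms. dim_row M = n"
    unfolding Ms_def using A by auto
  have C: "C \<in> carrier_mat n (dim_col C)"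
    unfolding C_def using dim_row_hcat_list[OF rows] by auto
  have rank: "mat_rank C = n"
    using ctrl A unfolding controllable_def C_def Ms_def by simp
  show ?thesis
  proof (rule mat_rank_full_imp_left_kernel_trivial[OF C rank \<xi>], intro allI impI)
    fix j assume "j < dim_col C"
    hence "col C j \<in> set (concat (map cols Ms))"
      unfolding C_def cols_hcat_list[OF rows, symmetric] by (metis cols_length cols_nth nth_mem)
    then obtain k where k: "k < n" and "col C j \<in> set (cols (A ^\<^sub>m k * B))"
      unfolding Ms_def by auto
    then obtain j' where j': "j' < m" and "col C j = col (A ^\<^sub>m k * B) j'"
      using A B by (auto simp: cols_def)
    hence col: "col C j = A ^\<^sub>m k *\<^sub>v col B j'"
      using col_mult2[OF pow_carrier_mat[OF A] B j'] by simp
    have colB: "col B j' \<in> carrier_vec n"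
      using B j' by simp
    have y: "transpose_mat A ^\<^sub>m k *\<^sub>v \<xi> \<in> carrier_vec n"
      using mult_mat_vec_carrier[OF pow_carrier_mat \<xi>] A by simp
    have "col C j \<bullet> \<xi> = \<xi> \<bullet> (A ^\<^sub>m k *\<^sub>v col B j')"
      unfolding col using comm_scalar_prod[OF mult_mat_vec_carrier[OF pow_carrier_mat[OF A] colB] \<xi>] .
    also have "\<dots> = (transpose_mat (A ^\<^sub>m k) *\<^sub>v \<xi>) \<bullet> col B j'"
      using transpose_vec_mult_scalar[OF pow_carrier_mat[OF A] colB \<xi>] by simp
    also have "\<dots> = (transpose_mat B *\<^sub>v (transpose_mat A ^\<^sub>m k *\<^sub>v \<xi>)) $ j'"
      using B j' comm_scalar_prod[OF y colB] by (simp add: transpose_pow_mat[OF A])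
    also have "\<dots> = 0"
      using unobservable j' by simp
    finally show "col C j \<bullet> \<xi> = 0" .
  qed
qed

lemma covector_powers_B_eq_0:
  assumes A: "A \<in> carrier_mat n n" and B: "B \<in> carrier_mat n m" and \<xi>: "\<xi> \<in> carrier_vec n"
    and lead: "a K \<noteq> 0"
    and relation: "vec_lincomb n a (\<lambda>k. transpose_mat A ^\<^sub>m k *\<^sub>v \<xi>) {..K} = 0\<^sub>v n"
    and init: "\<forall>j<K. transpose_mat B *\<^sub>v (transpose_mat A ^\<^sub>m j *\<^sub>v \<xi>) = 0\<^sub>v m"
  shows "transpose_mat B *\<^sub>v (transpose_mat A ^\<^sub>m j *\<^sub>v \<xi>) = 0\<^sub>v m"
proof -
  have AT: "transpose_mat A \<in> carrier_mat n n" and BT: "transpose_mat B \<in> carrier_mat m n"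
    using A B by auto
  have power_carrier: "transpose_mat A ^\<^sub>m k *\<^sub>v \<xi> \<in> carrier_vec n" for k
    using mult_mat_vec_carrier[OF pow_carrier_mat[OF AT] \<xi>] .
  have "vec_lincomb m a (\<lambda>k. transpose_mat B *\<^sub>v (transpose_mat A ^\<^sub>m (k + i) *\<^sub>v \<xi>)) {..K} = 0\<^sub>v m"
    for i
  proof -
    define P where "P = transpose_mat B * transpose_mat A ^\<^sub>m i"
    have P: "P \<in> carrier_mat m n"
      unfolding P_def using AT BT by simp
    have "transpose_mat B *\<^sub>v (transpose_mat A ^\<^sub>m (k + i) *\<^sub>v \<xi>) = P *\<^sub>v (transpose_mat A ^\<^sub>m k *\<^sub>v \<xi>)"
      for k
      unfolding P_def using pow_mat_add[OF AT, of i k]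
        assoc_mult_mat_vec[OF pow_carrier_mat[OF AT] pow_carrier_mat[OF AT] \<xi>]
        assoc_mult_mat_vec[OF BT pow_carrier_mat[OF AT] power_carrier]
      by (simp add: add.commute)
    hence "vec_lincomb m a (\<lambda>k. transpose_mat B *\<^sub>v (transpose_mat A ^\<^sub>m (k + i) *\<^sub>v \<xi>)) {..K} =
        P *\<^sub>v vec_lincomb n a (\<lambda>k. transpose_mat A ^\<^sub>m k *\<^sub>v \<xi>) {..K}"
      using mult_mat_vec_lincomb[OF P, of "{..K}" "\<lambda>k. transpose_mat A ^\<^sub>m k *\<^sub>v \<xi>" a] power_carrier
      by simp
    thus ?thesis
      unfolding relation using mult_mat_vec_zero[OF P] by simp
  qed
  thus ?thesis
    using mult_mat_vec_carrier[OF BT power_carrier]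
    by (intro linear_recurrence_forward_vec_eq_0[of a K, OF lead _ init]) blast+
qed

section \<open>Covectors annihilating all windows\<close>

(* Left-kernel form of the rank conditions MCPE, CCPE and HCPE. *)
definition persistently_exciting ::
    "nat \<Rightarrow> nat \<Rightarrow> ('i \<Rightarrow> nat) \<Rightarrow> ('i \<Rightarrow> nat \<Rightarrow> real vec) \<Rightarrow> 'i set \<Rightarrow> bool" where
  "persistently_exciting m N len Us I \<longleftrightarrow>
     (\<forall>\<theta>. (\<forall>l<N. \<theta> l \<in> carrier_vec m) \<longrightarrow>
        (\<forall>t\<in>I. \<forall>c. c + N \<le> len t \<longrightarrow> (\<Sum>l<N. \<theta> l \<bullet> Us t (c + l)) = 0) \<longrightarrow>
        (\<forall>l<N. \<theta> l = 0\<^sub>v m))"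

lemma persistently_excitingD:
  assumes "persistently_exciting m N len Us I" and "\<forall>l<N. \<theta> l \<in> carrier_vec m"
    and "\<forall>t\<in>I. \<forall>c. c + N \<le> len t \<longrightarrow> (\<Sum>l<N. \<theta> l \<bullet> Us t (c + l)) = 0" and "l < N"
  shows "\<theta> l = 0\<^sub>v m"
  using assms unfolding persistently_exciting_def by blast

lemma persistently_exciting_lincomb_eq_0:
  fixes Xs Us :: "'i \<Rightarrow> nat \<Rightarrow> real vec" and \<theta> :: "'k \<Rightarrow> nat \<Rightarrow> real vec"
  assumes exciting: "persistently_exciting m N len Us I"
    and carrier: "\<forall>t\<in>I. \<forall>c. c + N \<le> len t \<longrightarrow>
      Xs t c \<in> carrier_vec n \<and> (\<forall>l<N. Us t (c + l) \<in> carrier_vec m)"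
    and windows: "\<forall>k\<in>J. \<forall>t\<in>I. \<forall>c. c + N \<le> len t \<longrightarrow>
      Y k \<bullet> Xs t c + (\<Sum>l<N. \<theta> k l \<bullet> Us t (c + l)) = 0"
    and relation: "vec_lincomb n a Y J = 0\<^sub>v n"
    and l: "l < N"
  shows "vec_lincomb m a (\<lambda>k. \<theta> k l) J = 0\<^sub>v m"
proof (rule persistently_excitingD[OF exciting _ _ l])
  show "\<forall>l<N. vec_lincomb m a (\<lambda>k. \<theta> k l) J \<in> carrier_vec m"
    by simp
  show "\<forall>t\<in>I. \<forall>c. c + N \<le> len t \<longrightarrow> (\<Sum>l<N. vec_lincomb m a (\<lambda>k. \<theta> k l) J \<bullet> Us t (c + l)) = 0"
  proof (intro ballI allI impI)
    fix t c assume t: "t \<in> I" and c: "c + N \<le> len t"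
    have x: "Xs t c \<in> carrier_vec n" and u: "\<forall>l<N. Us t (c + l) \<in> carrier_vec m"
      using carrier t c by auto
    have "(\<Sum>l<N. vec_lincomb m a (\<lambda>k. \<theta> k l) J \<bullet> Us t (c + l)) =
        (\<Sum>l<N. \<Sum>k\<in>J. a k * (\<theta> k l \<bullet> Us t (c + l)))"
      using u by (intro sum.cong refl scalar_prod_vec_lincomb) auto
    also have "\<dots> = (\<Sum>k\<in>J. a k * (\<Sum>l<N. \<theta> k l \<bullet> Us t (c + l)))"
      by (subst sum.swap) (simp add: sum_distrib_left)
    also have "\<dots> = (\<Sum>k\<in>J. a k * - (Y k \<bullet> Xs t c))"
    proof (intro sum.cong refl)
      fix k assume "k \<in> J"
      hence "Y k \<bullet> Xs t c + (\<Sum>l<N. \<theta> k l \<bullet> Us t (c + l)) = 0"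
        using windows t c by blast
      hence "(\<Sum>l<N. \<theta> k l \<bullet> Us t (c + l)) = - (Y k \<bullet> Xs t c)"
        by linarith
      thus "a k * (\<Sum>l<N. \<theta> k l \<bullet> Us t (c + l)) = a k * - (Y k \<bullet> Xs t c)"
        by simp
    qed
    also have "\<dots> = - (vec_lincomb n a Y J \<bullet> Xs t c)"
      unfolding scalar_prod_vec_lincomb[OF x] by (simp add: sum_negf)
    also have "\<dots> = 0"
      unfolding relation using x by simp
    finally show "(\<Sum>l<N. vec_lincomb m a (\<lambda>k. \<theta> k l) J \<bullet> Us t (c + l)) = 0" .
  qed
qed

(* Started at index K - k, this is the input covector theta_k of the relation for the window at
   c + k: the blocks w (k - 1), ..., w 0, eta 0, ..., eta (L - 1), 0, 0, ... *)
definition annihilator_seq ::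
    "nat \<Rightarrow> (nat \<Rightarrow> real vec) \<Rightarrow> (nat \<Rightarrow> real vec) \<Rightarrow> nat \<Rightarrow> nat \<Rightarrow> nat \<Rightarrow> real vec" where
  "annihilator_seq m w \<eta> K L s =
     (if s < K then w (K - 1 - s) else if s < K + L then \<eta> (s - K) else 0\<^sub>v m)"

lemma scalar_prod_traj_window:
  assumes A: "A \<in> carrier_mat n n" and B: "B \<in> carrier_mat n m"
    and traj: "is_traj n m A B T x u" and window: "k + L \<le> T" and L: "1 \<le> L"
    and \<xi>: "\<xi> \<in> carrier_vec n"
    and annihilates: "\<xi> \<bullet> x k + (\<Sum>l<L. \<eta> l \<bullet> u (k + l)) = 0"
  shows "(transpose_mat A ^\<^sub>m k *\<^sub>v \<xi>) \<bullet> x 0 +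
    (\<Sum>l<k + L. (if l < k then transpose_mat B *\<^sub>v (transpose_mat A ^\<^sub>m (k - 1 - l) *\<^sub>v \<xi>)
                 else \<eta> (l - k)) \<bullet> u l) = 0"
proof -
  have "(\<Sum>l<k + L. (if l < k then transpose_mat B *\<^sub>v (transpose_mat A ^\<^sub>m (k - 1 - l) *\<^sub>v \<xi>)
                     else \<eta> (l - k)) \<bullet> u l) =
      (\<Sum>l<k. (transpose_mat B *\<^sub>v (transpose_mat A ^\<^sub>m (k - 1 - l) *\<^sub>v \<xi>)) \<bullet> u l) +
      (\<Sum>l<L. \<eta> l \<bullet> u (k + l))"
    unfolding sum_lessThan_add by simp
  moreover have "\<xi> \<bullet> x k = (transpose_mat A ^\<^sub>m k *\<^sub>v \<xi>) \<bullet> x 0 +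
      (\<Sum>l<k. (transpose_mat B *\<^sub>v (transpose_mat A ^\<^sub>m (k - 1 - l) *\<^sub>v \<xi>)) \<bullet> u l)"
    using variation_of_constants[OF A B traj _ \<xi>] window L by simp
  ultimately show ?thesis
    using annihilates by simp
qed

lemma annihilator_seq_windows:
  fixes Xs Us :: "'i \<Rightarrow> nat \<Rightarrow> real vec"
  assumes A: "A \<in> carrier_mat n n" and B: "B \<in> carrier_mat n m" and L: "1 \<le> L"
    and trajs: "\<forall>t\<in>I. is_traj n m A B (len t) (Xs t) (Us t)"
    and \<xi>: "\<xi> \<in> carrier_vec n" and K: "K \<le> n"
    and annihilates: "\<forall>t\<in>I. \<forall>c. c + L \<le> len t \<longrightarrow> \<xi> \<bullet> Xs t c + (\<Sum>l<L. \<eta> l \<bullet> Us t (c + l)) = 0"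
    and t: "t \<in> I" and c: "c + (L + n) \<le> len t" and k: "k \<le> K"
  shows "(transpose_mat A ^\<^sub>m k *\<^sub>v \<xi>) \<bullet> Xs t c + (\<Sum>l<L + n.
    annihilator_seq m (\<lambda>j. transpose_mat B *\<^sub>v (transpose_mat A ^\<^sub>m j *\<^sub>v \<xi>)) \<eta> K L (l + K - k)
      \<bullet> Us t (c + l)) = 0"
proof -
  define w where "w j = transpose_mat B *\<^sub>v (transpose_mat A ^\<^sub>m j *\<^sub>v \<xi>)" for j
  define \<sigma> where "\<sigma> = annihilator_seq m w \<eta> K L"
  have traj: "is_traj n m A B (L + n) (\<lambda>i. Xs t (c + i)) (\<lambda>i. Us t (c + i))"
    using is_traj_shift[OF trajs[rule_format, OF t] c] .
  have "c + k + L \<le> len t"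
    using c k K by simp
  hence "\<xi> \<bullet> Xs t (c + k) + (\<Sum>l<L. \<eta> l \<bullet> Us t (c + k + l)) = 0"
    using annihilates t by blast
  hence "(transpose_mat A ^\<^sub>m k *\<^sub>v \<xi>) \<bullet> Xs t c +
      (\<Sum>l<k + L. (if l < k then w (k - 1 - l) else \<eta> (l - k)) \<bullet> Us t (c + l)) = 0"
    using scalar_prod_traj_window[OF A B traj _ L \<xi>] k K unfolding w_def by (simp add: add.assoc)
  moreover have "(\<Sum>l<k + L. (if l < k then w (k - 1 - l) else \<eta> (l - k)) \<bullet> Us t (c + l)) =
      (\<Sum>l<L + n. \<sigma> (l + K - k) \<bullet> Us t (c + l))"
  proof (rule sum.mono_neutral_cong_left)
    show "\<forall>l\<in>{..<L + n} - {..<k + L}. \<sigma> (l + K - k) \<bullet> Us t (c + l) = 0"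
      using is_traj_carrier(2)[OF traj] k unfolding \<sigma>_def annihilator_seq_def by auto
    show "(if l < k then w (k - 1 - l) else \<eta> (l - k)) \<bullet> Us t (c + l) = \<sigma> (l + K - k) \<bullet> Us t (c + l)"
      if "l \<in> {..<k + L}" for l
      using that k unfolding \<sigma>_def annihilator_seq_def by (auto intro!: arg_cong[where f = w])
  qed (use k K in auto)
  ultimately show ?thesis
    unfolding \<sigma>_def w_def by simp
qed

lemma window_annihilator_eq_0:
  fixes Xs Us :: "'i \<Rightarrow> nat \<Rightarrow> real vec" and \<eta> :: "nat \<Rightarrow> real vec"
  assumes A: "A \<in> carrier_mat n n" and B: "B \<in> carrier_mat n m" and ctrl: "controllable A B"
    and L: "1 \<le> L"
    and trajs: "\<forall>t\<in>I. is_traj n m A B (len t) (Xs t) (Us t)"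
    and exciting: "persistently_exciting m (L + n) len Us I"
    and \<xi>: "\<xi> \<in> carrier_vec n" and \<eta>: "\<forall>l<L. \<eta> l \<in> carrier_vec m"
    and annihilates: "\<forall>t\<in>I. \<forall>c. c + L \<le> len t \<longrightarrow> \<xi> \<bullet> Xs t c + (\<Sum>l<L. \<eta> l \<bullet> Us t (c + l)) = 0"
  shows "\<xi> = 0\<^sub>v n \<and> (\<forall>l<L. \<eta> l = 0\<^sub>v m)"
proof -
  define Y where "Y j = transpose_mat A ^\<^sub>m j *\<^sub>v \<xi>" for j
  define w where "w j = transpose_mat B *\<^sub>v Y j" for j
  obtain a K where K: "K \<le> n" "a K \<noteq> 0" and relation: "vec_lincomb n a Y {..K} = 0\<^sub>v n"
    using ex_linear_relation[of n Y] by blast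
  define \<sigma> where "\<sigma> = annihilator_seq m w \<eta> K L"
  have AT: "transpose_mat A \<in> carrier_mat n n" and BT: "transpose_mat B \<in> carrier_mat m n"
    using A B by auto
  have "w j \<in> carrier_vec m" for j
    unfolding w_def Y_def using mult_mat_vec_carrier[OF pow_carrier_mat[OF AT] \<xi>] BT by simp
  hence \<sigma>_carrier: "\<forall>s. \<sigma> s \<in> carrier_vec m"
    unfolding \<sigma>_def annihilator_seq_def using \<eta> by simp
  have windows: "\<forall>k\<in>{..K}. \<forall>t\<in>I. \<forall>c. c + (L + n) \<le> len t \<longrightarrow>
      Y k \<bullet> Xs t c + (\<Sum>l<L + n. \<sigma> (l + K - k) \<bullet> Us t (c + l)) = 0"
    using annihilator_seq_windows[OF A B L trajs \<xi> K(1) annihilates] unfolding \<sigma>_def w_def Y_def by simp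
  have "\<forall>t\<in>I. \<forall>c. c + (L + n) \<le> len t \<longrightarrow>
      Xs t c \<in> carrier_vec n \<and> (\<forall>l<L + n. Us t (c + l) \<in> carrier_vec m)"
    using trajs L is_traj_carrier by fastforce
  hence recurrence: "\<forall>l<K + L. vec_lincomb m a (\<lambda>k. \<sigma> (l + K - k)) {..K} = 0\<^sub>v m"
    using persistently_exciting_lincomb_eq_0[OF exciting _ windows relation] K(1) by simp
  have "\<forall>s\<ge>K + L. \<sigma> s = 0\<^sub>v m"
    unfolding \<sigma>_def annihilator_seq_def by simp
  hence \<sigma>_0: "\<sigma> s = 0\<^sub>v m" for s
    using linear_recurrence_backward_vec_eq_0[of a K, OF K(2) \<sigma>_carrier _ recurrence] by blast
  have "\<forall>j<K. w j = 0\<^sub>v m"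
  proof (intro allI impI)
    fix j assume "j < K"
    thus "w j = 0\<^sub>v m"
      using \<sigma>_0[of "K - 1 - j"] unfolding \<sigma>_def annihilator_seq_def by simp
  qed
  hence "\<forall>j. transpose_mat B *\<^sub>v (transpose_mat A ^\<^sub>m j *\<^sub>v \<xi>) = 0\<^sub>v m"
    using covector_powers_B_eq_0[OF A B \<xi> K(2) relation[unfolded Y_def]] unfolding w_def Y_def by blast
  hence "\<xi> = 0\<^sub>v n"
    by (rule controllable_covector_eq_0[OF A B ctrl \<xi>])
  moreover have "\<eta> l = 0\<^sub>v m" if "l < L" for l
    using \<sigma>_0[of "K + l"] that unfolding \<sigma>_def annihilator_seq_def by simp
  ultimately show ?thesis
    by blast
qed

lemma window_annihilator_vec_eq_0:
  fixes Xs Us :: "'i \<Rightarrow> nat \<Rightarrow> real vec"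
  assumes A: "A \<in> carrier_mat n n" and B: "B \<in> carrier_mat n m" and ctrl: "controllable A B"
    and L: "1 \<le> L"
    and trajs: "\<forall>t\<in>I. is_traj n m A B (len t) (Xs t) (Us t)"
    and exciting: "persistently_exciting m (L + n) len Us I"
    and z: "z \<in> carrier_vec (n + m * L)"
    and annihilates: "\<forall>t\<in>I. \<forall>c. c + L \<le> len t \<longrightarrow> (Xs t c @\<^sub>v stack m L (\<lambda>k. Us t (c + k))) \<bullet> z = 0"
  shows "z = 0\<^sub>v (n + m * L)"
proof -
  define \<xi> where "\<xi> = vec_first z n"
  define \<eta> where "\<eta> l = vec m (\<lambda>b. vec_last z (m * L) $ (l * m + b))" for l
  have \<xi>: "\<xi> \<in> carrier_vec n" and \<eta>: "\<forall>l<L. \<eta> l \<in> carrier_vec m"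
    unfolding \<xi>_def \<eta>_def by auto
  have z_split: "z = \<xi> @\<^sub>v stack m L \<eta>"
    unfolding \<xi>_def \<eta>_def stack_blocks[OF vec_last_carrier] using z by simp
  have "\<xi> = 0\<^sub>v n \<and> (\<forall>l<L. \<eta> l = 0\<^sub>v m)"
  proof (rule window_annihilator_eq_0[OF A B ctrl L trajs exciting \<xi> \<eta>], intro ballI allI impI)
    fix t c assume t: "t \<in> I" and c: "c + L \<le> len t"
    have "\<forall>k<len t. Xs t k \<in> carrier_vec n \<and> Us t k \<in> carrier_vec m"
      using trajs t unfolding is_traj_def by blast
    hence x: "Xs t c \<in> carrier_vec n" and u: "\<forall>l<L. Us t (c + l) \<in> carrier_vec m"
      using c L by auto
    have "\<xi> \<bullet> Xs t c + (\<Sum>l<L. \<eta> l \<bullet> Us t (c + l)) = z \<bullet> (Xs t c @\<^sub>v stack m L (\<lambda>k. Us t (c + k)))"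
      unfolding z_split scalar_prod_append[OF \<xi> stack_carrier x stack_carrier] stack_scalar_prod[OF u] ..
    also have "\<dots> = 0"
      using annihilates t c comm_scalar_prod[OF z append_carrier_vec[OF x stack_carrier]] by simp
    finally show "\<xi> \<bullet> Xs t c + (\<Sum>l<L. \<eta> l \<bullet> Us t (c + l)) = 0" .
  qed
  hence "stack m L \<eta> = 0\<^sub>v (m * L)"
    using stack_cong[of L \<eta> "\<lambda>_. 0\<^sub>v m" m] by (simp add: stack_zero)
  thus ?thesis
    using z_split \<open>\<xi> = 0\<^sub>v n \<and> (\<forall>l<L. \<eta> l = 0\<^sub>v m)\<close> by (auto intro!: eq_vecI)
qed

definition window_matrix ::
    "nat \<Rightarrow> nat \<Rightarrow> nat \<Rightarrow> ('i \<Rightarrow> nat \<Rightarrow> real vec) \<Rightarrow> ('i \<Rightarrow> nat \<Rightarrow> real vec) \<Rightarrow> ('i \<times> nat) list \<Rightarrow> real mat"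
  where
  "window_matrix n m L Xs Us ws =
     mat_of_cols (n + m * L) (map (\<lambda>(t, c). Xs t c @\<^sub>v stack m L (\<lambda>k. Us t (c + k))) ws)"

lemma window_matrix_carrier: "window_matrix n m L Xs Us ws \<in> carrier_mat (n + m * L) (length ws)"
  using mat_of_cols_carrier(1)[of "n + m * L" "map (\<lambda>(t, c). Xs t c @\<^sub>v stack m L (\<lambda>k. Us t (c + k))) ws"]
  unfolding window_matrix_def by (simp only: length_map)

lemma col_window_matrix:
  assumes "j < length ws" and "ws ! j = (t, c)" and "Xs t c \<in> carrier_vec n"
  shows "col (window_matrix n m L Xs Us ws) j = Xs t c @\<^sub>v stack m L (\<lambda>k. Us t (c + k))"
proof -
  have "map (\<lambda>(t, c). Xs t c @\<^sub>v stack m L (\<lambda>k. Us t (c + k))) ws ! j =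
      Xs t c @\<^sub>v stack m L (\<lambda>k. Us t (c + k))"
    using assms(1,2) by simp
  moreover have "Xs t c @\<^sub>v stack m L (\<lambda>k. Us t (c + k)) \<in> carrier_vec (n + m * L)"
    using assms(3) by simp
  ultimately show ?thesis
    unfolding window_matrix_def using assms(1) by (subst col_mat_of_cols) simp_all
qed

lemma window_matrix_left_kernel_trivial:
  fixes Xs Us :: "'i \<Rightarrow> nat \<Rightarrow> real vec" and ws :: "('i \<times> nat) list"
  assumes A: "A \<in> carrier_mat n n" and B: "B \<in> carrier_mat n m" and ctrl: "controllable A B"
    and L: "1 \<le> L"
    and trajs: "\<forall>t\<in>I. is_traj n m A B (len t) (Xs t) (Us t)"
    and exciting: "persistently_exciting m (L + n) len Us I"
    and ws: "set ws = {(t, c). t \<in> I \<and> c + L \<le> len t}"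
  shows "\<forall>z\<in>carrier_vec (n + m * L).
    (\<forall>j<length ws. col (window_matrix n m L Xs Us ws) j \<bullet> z = 0) \<longrightarrow> z = 0\<^sub>v (n + m * L)"
proof (intro ballI impI)
  fix z assume z: "z \<in> carrier_vec (n + m * L)"
    and orth: "\<forall>j<length ws. col (window_matrix n m L Xs Us ws) j \<bullet> z = 0"
  show "z = 0\<^sub>v (n + m * L)"
  proof (rule window_annihilator_vec_eq_0[OF A B ctrl L trajs exciting z], intro ballI allI impI)
    fix t c assume t: "t \<in> I" and c: "c + L \<le> len t"
    hence "(t, c) \<in> set ws"
      unfolding ws by simp
    then obtain j where j: "j < length ws" and tc: "ws ! j = (t, c)"
      by (metis in_set_conv_nth)
    have "Xs t c \<in> carrier_vec n"
      using is_traj_carrier(1)[OF trajs[rule_format, OF t]] c L by simp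
    hence "col (window_matrix n m L Xs Us ws) j = Xs t c @\<^sub>v stack m L (\<lambda>k. Us t (c + k))"
      by (rule col_window_matrix[OF j tc])
    thus "(Xs t c @\<^sub>v stack m L (\<lambda>k. Us t (c + k))) \<bullet> z = 0"
      using orth j by metis
  qed
qed

lemma window_matrix_mult_vec:
  assumes X: "\<forall>j<length ws. (case ws ! j of (t, c) \<Rightarrow> Xs t c) \<in> carrier_vec n"
    and g: "g \<in> carrier_vec (length ws)"
  shows "window_matrix n m L Xs Us ws *\<^sub>v g =
    vec_lincomb n (\<lambda>j. g $ j) (\<lambda>j. case ws ! j of (t, c) \<Rightarrow> Xs t c) {..<length ws} @\<^sub>v
    stack m L (\<lambda>k. vec_lincomb m (\<lambda>j. g $ j) (\<lambda>j. case ws ! j of (t, c) \<Rightarrow> Us t (c + k)) {..<length ws})"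
proof -
  have "window_matrix n m L Xs Us ws *\<^sub>v g = vec_lincomb (n + m * L) (\<lambda>j. g $ j)
      (\<lambda>j. (case ws ! j of (t, c) \<Rightarrow> Xs t c) @\<^sub>v
        stack m L (\<lambda>k. case ws ! j of (t, c) \<Rightarrow> Us t (c + k))) {..<length ws}"
    unfolding mult_mat_vec_eq_lincomb_cols[OF window_matrix_carrier g]
  proof (rule vec_lincomb_cong)
    fix j assume "j \<in> {..<length ws}"
    hence j: "j < length ws"
      by simp
    obtain t c where tc: "ws ! j = (t, c)"
      by (cases "ws ! j")
    show "col (window_matrix n m L Xs Us ws) j = (case ws ! j of (t, c) \<Rightarrow> Xs t c) @\<^sub>v
        stack m L (\<lambda>k. case ws ! j of (t, c) \<Rightarrow> Us t (c + k))"
      using col_window_matrix[OF j tc] X j tc by auto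
  qed
  also have "\<dots> = vec_lincomb n (\<lambda>j. g $ j) (\<lambda>j. case ws ! j of (t, c) \<Rightarrow> Xs t c) {..<length ws} @\<^sub>v
      stack m L (\<lambda>k. vec_lincomb m (\<lambda>j. g $ j) (\<lambda>j. case ws ! j of (t, c) \<Rightarrow> Us t (c + k)) {..<length ws})"
    unfolding vec_lincomb_stack[symmetric] using X by (intro vec_lincomb_append) auto
  finally show ?thesis .
qed

section \<open>Hankel mosaics\<close>

definition hankel_mosaic :: "nat \<Rightarrow> nat \<Rightarrow> ('i \<Rightarrow> nat) \<Rightarrow> ('i \<Rightarrow> nat \<Rightarrow> real vec) \<Rightarrow> 'i list \<Rightarrow> real mat" where
  "hankel_mosaic q L len Zs ts = hcat_list (q * L) (map (\<lambda>t. hankel q L (len t) (Zs t)) ts)"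

definition hankel_windows :: "nat \<Rightarrow> ('i \<Rightarrow> nat) \<Rightarrow> 'i list \<Rightarrow> ('i \<times> nat) list" where
  "hankel_windows L len ts = concat (map (\<lambda>t. map (Pair t) [0..<len t + 1 - L]) ts)"

lemma set_hankel_windows: "set (hankel_windows L len ts) = {(t, c). t \<in> set ts \<and> c + L \<le> len t}"
  unfolding hankel_windows_def by auto

lemma dim_row_hankel [simp]: "dim_row (hankel q L T z) = q * L"
  and dim_col_hankel [simp]: "dim_col (hankel q L T z) = T + 1 - L"
  unfolding hankel_def by simp_all

lemma cols_hankel: "cols (hankel q L T z) = map (\<lambda>c. stack q L (\<lambda>k. z (c + k))) [0..<T + 1 - L]"
proof (rule nth_equalityI)
  show "length (cols (hankel q L T z)) = length (map (\<lambda>c. stack q L (\<lambda>k. z (c + k))) [0..<T + 1 - L])"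
    by (simp add: hankel_def)
  fix c assume "c < length (cols (hankel q L T z))"
  hence c: "c < T + 1 - L"
    by (simp add: hankel_def)
  show "cols (hankel q L T z) ! c = map (\<lambda>c. stack q L (\<lambda>k. z (c + k))) [0..<T + 1 - L] ! c"
    using c by (intro eq_vecI) (auto simp: hankel_def add.commute)
qed

lemma dim_row_hankel_mosaic [simp]: "dim_row (hankel_mosaic q L len Zs ts) = q * L"
  unfolding hankel_mosaic_def by (rule dim_row_hcat_list) simp

lemma cols_hankel_mosaic:
  "cols (hankel_mosaic q L len Zs ts) =
     map (\<lambda>(t, c). stack q L (\<lambda>k. Zs t (c + k))) (hankel_windows L len ts)"
  unfolding hankel_mosaic_def hankel_windows_def
  by (subst cols_hcat_list) (auto simp: cols_hankel map_concat comp_def)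

lemma dim_col_hankel_mosaic: "dim_col (hankel_mosaic q L len Zs ts) = length (hankel_windows L len ts)"
  using arg_cong[OF cols_hankel_mosaic, of length] by simp

lemma col_hankel_mosaic:
  assumes "j < length (hankel_windows L len ts)" and "hankel_windows L len ts ! j = (t, c)"
  shows "col (hankel_mosaic q L len Zs ts) j = stack q L (\<lambda>k. Zs t (c + k))"
proof -
  have "j < dim_col (hankel_mosaic q L len Zs ts)"
    using assms(1) by (simp add: dim_col_hankel_mosaic)
  hence "col (hankel_mosaic q L len Zs ts) j = cols (hankel_mosaic q L len Zs ts) ! j"
    by simp
  also have "\<dots> = stack q L (\<lambda>k. Zs t (c + k))"
    unfolding cols_hankel_mosaic using assms by simp
  finally show ?thesis .
qed

lemma hankel_mosaic_mult_vec:
  assumes "g \<in> carrier_vec (length (hankel_windows L len ts))"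
  shows "hankel_mosaic q L len Zs ts *\<^sub>v g = stack q L (\<lambda>k. vec_lincomb q (\<lambda>j. g $ j)
    (\<lambda>j. case hankel_windows L len ts ! j of (t, c) \<Rightarrow> Zs t (c + k))
    {..<length (hankel_windows L len ts)})"
proof (rule mult_mat_vec_stack_cols[OF _ assms])
  show "hankel_mosaic q L len Zs ts \<in> carrier_mat (q * L) (length (hankel_windows L len ts))"
    unfolding carrier_mat_def by (simp add: dim_col_hankel_mosaic)
  fix j assume j: "j < length (hankel_windows L len ts)"
  obtain t c where tc: "hankel_windows L len ts ! j = (t, c)"
    by (cases "hankel_windows L len ts ! j")
  show "col (hankel_mosaic q L len Zs ts) j =
      stack q L (\<lambda>k. case hankel_windows L len ts ! j of (t, c) \<Rightarrow> Zs t (c + k))"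
    unfolding col_hankel_mosaic[OF j tc] tc by simp
qed

lemma is_traj_hankel_window:
  assumes trajs: "\<forall>t\<in>set ts. is_traj n m A B (len t) (Xs t) (Us t)"
  shows "\<forall>j<length (hankel_windows L len ts). is_traj n m A B L
    (\<lambda>k. case hankel_windows L len ts ! j of (t, c) \<Rightarrow> Xs t (c + k))
    (\<lambda>k. case hankel_windows L len ts ! j of (t, c) \<Rightarrow> Us t (c + k))"
proof (intro allI impI)
  fix j assume j: "j < length (hankel_windows L len ts)"
  obtain t c where tc: "hankel_windows L len ts ! j = (t, c)"
    by (cases "hankel_windows L len ts ! j")
  hence t: "t \<in> set ts" and c: "c + L \<le> len t"
    using nth_mem[OF j] set_hankel_windows[of L len ts] by auto
  show "is_traj n m A B L (\<lambda>k. case hankel_windows L len ts ! j of (t, c) \<Rightarrow> Xs t (c + k))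
      (\<lambda>k. case hankel_windows L len ts ! j of (t, c) \<Rightarrow> Us t (c + k))"
    unfolding tc using is_traj_shift[OF trajs[rule_format, OF t] c] by simp
qed

lemma append_rows_hankel_mosaic_mult_vec:
  assumes g: "g \<in> carrier_vec (length (hankel_windows L len ts))"
  shows "(hankel_mosaic n L len Xs ts @\<^sub>r hankel_mosaic m L len Us ts) *\<^sub>v g =
    stack n L (\<lambda>k. vec_lincomb n (\<lambda>j. g $ j)
      (\<lambda>j. case hankel_windows L len ts ! j of (t, c) \<Rightarrow> Xs t (c + k))
      {..<length (hankel_windows L len ts)}) @\<^sub>v
    stack m L (\<lambda>k. vec_lincomb m (\<lambda>j. g $ j)
      (\<lambda>j. case hankel_windows L len ts ! j of (t, c) \<Rightarrow> Us t (c + k))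
      {..<length (hankel_windows L len ts)})"
proof -
  have "hankel_mosaic n L len Xs ts \<in> carrier_mat (n * L) (length (hankel_windows L len ts))"
    and "hankel_mosaic m L len Us ts \<in> carrier_mat (m * L) (length (hankel_windows L len ts))"
    unfolding carrier_mat_def by (simp_all add: dim_col_hankel_mosaic)
  from mat_mult_append[OF this g] show ?thesis
    unfolding hankel_mosaic_mult_vec[OF g] .
qed

lemma persistently_exciting_if_mat_rank:
  assumes carrier: "\<forall>t\<in>set ts. \<forall>k<len t. Us t k \<in> carrier_vec m"
    and rank: "mat_rank (hankel_mosaic m N len Us ts) = m * N"
  shows "persistently_exciting m N len Us (set ts)"
  unfolding persistently_exciting_def
proof (intro allI impI)
  fix \<theta> l assume \<theta>: "\<forall>l<N. \<theta> l \<in> carrier_vec m"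
    and annihilates: "\<forall>t\<in>set ts. \<forall>c. c + N \<le> len t \<longrightarrow> (\<Sum>l<N. \<theta> l \<bullet> Us t (c + l)) = 0"
    and l: "l < N"
  define M where "M = hankel_mosaic m N len Us ts"
  have M: "M \<in> carrier_mat (m * N) (dim_col M)"
    unfolding M_def carrier_mat_def by simp
  have "stack m N \<theta> = 0\<^sub>v (m * N)"
  proof (rule mat_rank_full_imp_left_kernel_trivial[OF M rank[folded M_def] stack_carrier], intro allI impI)
    fix j assume "j < dim_col M"
    hence j: "j < length (hankel_windows N len ts)"
      unfolding M_def dim_col_hankel_mosaic .
    obtain t c where tc: "hankel_windows N len ts ! j = (t, c)"
      by (cases "hankel_windows N len ts ! j")
    have window: "t \<in> set ts" "c + N \<le> len t"
      using nth_mem[OF j] tc set_hankel_windows[of N len ts] by auto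
    have "col M j \<bullet> stack m N \<theta> = stack m N \<theta> \<bullet> stack m N (\<lambda>k. Us t (c + k))"
      unfolding M_def col_hankel_mosaic[OF j tc] by (rule comm_scalar_prod[OF stack_carrier stack_carrier])
    also have "\<dots> = (\<Sum>l<N. \<theta> l \<bullet> Us t (c + l))"
      using carrier window by (intro stack_scalar_prod) auto
    finally show "col M j \<bullet> stack m N \<theta> = 0"
      using annihilates window by simp
  qed
  thus "\<theta> l = 0\<^sub>v m"
    using stack_inject[of m N \<theta> "\<lambda>_. 0\<^sub>v m"] \<theta> l by (simp add: stack_zero)
qed

theorem fundamental_lemma_hankel_mosaic:
  fixes Xs Us :: "'i \<Rightarrow> nat \<Rightarrow> real vec"
  assumes A: "A \<in> carrier_mat n n" and B: "B \<in> carrier_mat n m" and ctrl: "controllable A B"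
    and L: "1 \<le> L"
    and trajs: "\<forall>t\<in>set ts. is_traj n m A B (len t) (Xs t) (Us t)"
    and rank: "mat_rank (hankel_mosaic m (L + n) len Us ts) = m * (L + n)"
    and traj: "is_traj n m A B L xb ub"
  shows "\<exists>g. g \<in> carrier_vec (dim_col (hankel_mosaic n L len Xs ts)) \<and>
    stack n L xb @\<^sub>v stack m L ub = (hankel_mosaic n L len Xs ts @\<^sub>r hankel_mosaic m L len Us ts) *\<^sub>v g"
proof -
  define ws where "ws = hankel_windows L len ts"
  define X where "X j k = (case ws ! j of (t, c) \<Rightarrow> Xs t (c + k))" for j k
  define U where "U j k = (case ws ! j of (t, c) \<Rightarrow> Us t (c + k))" for j k
  have windows: "\<forall>j<length ws. is_traj n m A B L (X j) (U j)"
    unfolding X_def U_def ws_def using is_traj_hankel_window[OF trajs] by blast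
  have "persistently_exciting m (L + n) len Us (set ts)"
    using persistently_exciting_if_mat_rank[OF _ rank] trajs is_traj_carrier(2) by blast
  note kernel = window_matrix_left_kernel_trivial[OF A B ctrl L trajs this set_hankel_windows]
  have xb0: "xb 0 \<in> carrier_vec n"
    using is_traj_carrier(1)[OF traj] L by simp
  hence "xb 0 @\<^sub>v stack m L ub \<in> carrier_vec (n + m * L)"
    by simp
  then obtain g where g: "g \<in> carrier_vec (length ws)"
      and "window_matrix n m L Xs Us ws *\<^sub>v g = xb 0 @\<^sub>v stack m L ub"
    using left_kernel_trivial_imp_surj[OF window_matrix_carrier kernel] unfolding ws_def by blast
  have X0: "\<forall>j<length ws. (case ws ! j of (t, c) \<Rightarrow> Xs t c) \<in> carrier_vec n"
  proof (intro allI impI)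
    fix j assume j: "j < length ws"
    have "X j 0 \<in> carrier_vec n"
      using is_traj_carrier(1)[OF windows[rule_format, OF j], of 0] L by simp
    thus "(case ws ! j of (t, c) \<Rightarrow> Xs t c) \<in> carrier_vec n"
      unfolding X_def by simp
  qed
  have "vec_lincomb n (\<lambda>j. g $ j) (\<lambda>j. X j 0) {..<length ws} @\<^sub>v
      stack m L (\<lambda>k. vec_lincomb m (\<lambda>j. g $ j) (\<lambda>j. U j k) {..<length ws}) = xb 0 @\<^sub>v stack m L ub"
    using window_matrix_mult_vec[OF X0 g, of m L Us] \<open>window_matrix n m L Xs Us ws *\<^sub>v g = _\<close>
    unfolding X_def U_def by simp
  hence combination: "vec_lincomb n (\<lambda>j. g $ j) (\<lambda>j. X j 0) {..<length ws} = xb 0"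
      "stack m L (\<lambda>k. vec_lincomb m (\<lambda>j. g $ j) (\<lambda>j. U j k) {..<length ws}) = stack m L ub"
    unfolding append_vec_eq[OF vec_lincomb_carrier xb0] by auto
  have "\<forall>k<L. vec_lincomb m (\<lambda>j. g $ j) (\<lambda>j. U j k) {..<length ws} = ub k"
    using stack_inject[OF combination(2)] is_traj_carrier(2)[OF traj] by simp
  moreover have "\<forall>k<L. vec_lincomb n (\<lambda>j. g $ j) (\<lambda>j. X j k) {..<length ws} = xb k"
    using lincomb_traj_eq[where J = "{..<length ws}" and xs = X and us = U and c = "\<lambda>j. g $ j",
        OF A B _ traj combination(1) calculation] windows by simp
  ultimately have "(hankel_mosaic n L len Xs ts @\<^sub>r hankel_mosaic m L len Us ts) *\<^sub>v g =
      stack n L xb @\<^sub>v stack m L ub"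
    unfolding append_rows_hankel_mosaic_mult_vec[OF g[unfolded ws_def]] X_def U_def ws_def
    by (intro arg_cong2[where f = "(@\<^sub>v)"] stack_cong) auto
  thus ?thesis
    using g unfolding ws_def by (auto simp: dim_col_hankel_mosaic)
qed

section \<open>Cumulative, mosaic and hybrid Hankel matrices\<close>

lemma smult_hankel:
  assumes "\<forall>k<T. z k \<in> carrier_vec q"
  shows "a \<cdot>\<^sub>m hankel q L T z = hankel q L T (\<lambda>k. a \<cdot>\<^sub>v z k)"
proof (rule eq_matI)
  fix r c assume r: "r < dim_row (hankel q L T (\<lambda>k. a \<cdot>\<^sub>v z k))"
    and c: "c < dim_col (hankel q L T (\<lambda>k. a \<cdot>\<^sub>v z k))"
  have "r div q < L" "r mod q < q"
    using div_mod_less_mult r by simp_all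
  hence "z (r div q + c) \<in> carrier_vec q" "r mod q < q"
    using assms c by auto
  thus "(a \<cdot>\<^sub>m hankel q L T z) $$ (r, c) = hankel q L T (\<lambda>k. a \<cdot>\<^sub>v z k) $$ (r, c)"
    using r c by (simp add: hankel_def)
qed simp_all

lemma hankel_cum_eq_hankel_mosaic:
  "hankel_cum q L \<alpha> T0 z [0..<p] =
     hankel_mosaic q L (\<lambda>_. T0) (\<lambda>_ k. vec_lincomb q \<alpha> (\<lambda>i. z i k) {..<p}) [()]"
proof -
  have "hankel_cum q L \<alpha> T0 z [0..<p] = hankel q L T0 (\<lambda>k. vec_lincomb q \<alpha> (\<lambda>i. z i k) {..<p})"
  proof (rule eq_matI)
    fix r c assume "r < dim_row (hankel q L T0 (\<lambda>k. vec_lincomb q \<alpha> (\<lambda>i. z i k) {..<p}))"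
      and "c < dim_col (hankel q L T0 (\<lambda>k. vec_lincomb q \<alpha> (\<lambda>i. z i k) {..<p}))"
    hence r: "r < q * L" and c: "c < T0 + 1 - L" and "r mod q < q"
      using div_mod_less_mult by simp_all
    thus "hankel_cum q L \<alpha> T0 z [0..<p] $$ (r, c) =
        hankel q L T0 (\<lambda>k. vec_lincomb q \<alpha> (\<lambda>i. z i k) {..<p}) $$ (r, c)"
      by (simp add: hankel_cum_def hankel_def sum_list_sum_nth atLeast0LessThan)
  qed (simp_all add: hankel_cum_def)
  thus ?thesis
    unfolding hankel_mosaic_def by (simp add: hcat_empty_right)
qed

lemma hankel_mos_eq_hankel_mosaic:
  assumes "\<forall>i\<in>set is. \<forall>k<T i. z i k \<in> carrier_vec q"
  shows "hankel_mos q L \<alpha> T z is = hankel_mosaic q L T (\<lambda>i k. \<alpha> i \<cdot>\<^sub>v z i k) is"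
  unfolding hankel_mos_def hankel_mosaic_def using assms smult_hankel
  by (intro arg_cong[where f = "hcat_list (q * L)"]) simp

lemma hankel_hyb_eq_hankel_mosaic:
  assumes "\<forall>i\<in>{pb..<p}. \<forall>k<T i. z i k \<in> carrier_vec q"
  shows "hankel_hyb q L \<alpha> T0 T z pb p =
    hankel_mosaic q L (case_option T0 T)
      (case_option (\<lambda>k. vec_lincomb q \<alpha> (\<lambda>i. z i k) {..<pb}) (\<lambda>i k. \<alpha> i \<cdot>\<^sub>v z i k))
      (None # map Some [pb..<p])"
proof -
  have "hankel_mos q L \<alpha> T z [pb..<p] = hankel_mosaic q L T (\<lambda>i k. \<alpha> i \<cdot>\<^sub>v z i k) [pb..<p]"
    by (rule hankel_mos_eq_hankel_mosaic) (use assms in simp)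
  thus ?thesis
    unfolding hankel_hyb_def hankel_cum_eq_hankel_mosaic hankel_mosaic_def
    by (simp add: hcat_empty_right comp_def)
qed

lemma fundamental_lemma_cumulative:
  assumes A: "A \<in> carrier_mat n n" and B: "B \<in> carrier_mat n m" and ctrl: "controllable A B"
    and L: "1 \<le> L"
    and trajs: "\<forall>i<p. is_traj n m A B T0 (x i) (u i)"
    and ccpe: "CCPE m (L + n) T0 u p" and alpha: "\<forall>i<p. \<alpha> i \<noteq> 0"
    and traj: "is_traj n m A B L xb ub"
  shows "\<exists>g. g \<in> carrier_vec (T0 + 1 - L) \<and> stack n L xb @\<^sub>v stack m L ub =
    (hankel_cum n L \<alpha> T0 x [0..<p] @\<^sub>r hankel_cum m L \<alpha> T0 u [0..<p]) *\<^sub>v g"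
proof -
  define xc where "xc k = vec_lincomb n \<alpha> (\<lambda>i. x i k) {..<p}" for k
  define uc where "uc k = vec_lincomb m \<alpha> (\<lambda>i. u i k) {..<p}" for k
  have "is_traj n m A B T0 xc uc"
    unfolding xc_def uc_def using trajs by (intro is_traj_lincomb[OF A B]) auto
  moreover have "mat_rank (hankel_mosaic m (L + n) (\<lambda>_. T0) (\<lambda>_. uc) [()]) = m * (L + n)"
    using ccpe alpha unfolding CCPE_def hankel_cum_eq_hankel_mosaic uc_def by blast
  ultimately have "\<exists>g. g \<in> carrier_vec (dim_col (hankel_mosaic n L (\<lambda>_. T0) (\<lambda>_. xc) [()])) \<and>
      stack n L xb @\<^sub>v stack m L ub =
      (hankel_mosaic n L (\<lambda>_. T0) (\<lambda>_. xc) [()] @\<^sub>r hankel_mosaic m L (\<lambda>_. T0) (\<lambda>_. uc) [()]) *\<^sub>v g"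
    by (intro fundamental_lemma_hankel_mosaic[OF A B ctrl L _ _ traj]) auto
  thus ?thesis
    unfolding hankel_cum_eq_hankel_mosaic xc_def uc_def
    by (simp add: dim_col_hankel_mosaic hankel_windows_def)
qed

lemma fundamental_lemma_mosaic:
  assumes A: "A \<in> carrier_mat n n" and B: "B \<in> carrier_mat n m" and ctrl: "controllable A B"
    and L: "1 \<le> L"
    and trajs: "\<forall>i<p. is_traj n m A B (T i) (x i) (u i)"
    and mcpe: "MCPE m (L + n) T u p" and alpha: "\<forall>i<p. \<alpha> i \<noteq> 0"
    and traj: "is_traj n m A B L xb ub"
  shows "\<exists>g. g \<in> carrier_vec (dim_col (hankel_mos n L \<alpha> T x [0..<p])) \<and>
    stack n L xb @\<^sub>v stack m L ub = (hankel_mos n L \<alpha> T x [0..<p] @\<^sub>r hankel_mos m L \<alpha> T u [0..<p]) *\<^sub>v g"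
proof -
  have carrier: "\<forall>i\<in>set [0..<p]. \<forall>k<T i. x i k \<in> carrier_vec n"
      "\<forall>i\<in>set [0..<p]. \<forall>k<T i. u i k \<in> carrier_vec m"
    using trajs unfolding is_traj_def by auto
  have "\<forall>i\<in>set [0..<p]. is_traj n m A B (T i) (\<lambda>k. \<alpha> i \<cdot>\<^sub>v x i k) (\<lambda>k. \<alpha> i \<cdot>\<^sub>v u i k)"
    using trajs is_traj_smult[OF A B] by auto
  moreover have "mat_rank (hankel_mosaic m (L + n) T (\<lambda>i k. \<alpha> i \<cdot>\<^sub>v u i k) [0..<p]) = m * (L + n)"
    using mcpe alpha carrier(2) unfolding MCPE_def hankel_mos_eq_hankel_mosaic[OF carrier(2)] by blast
  ultimately show ?thesis
    unfolding hankel_mos_eq_hankel_mosaic[OF carrier(1)] hankel_mos_eq_hankel_mosaic[OF carrier(2)]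
    by (intro fundamental_lemma_hankel_mosaic[OF A B ctrl L _ _ traj]) auto
qed

lemma fundamental_lemma_hybrid:
  assumes A: "A \<in> carrier_mat n n" and B: "B \<in> carrier_mat n m" and ctrl: "controllable A B"
    and L: "1 \<le> L"
    and trajs: "\<forall>i<p. is_traj n m A B (T i) (x i) (u i)"
    and pb: "pb \<le> p" and T0: "\<forall>i<pb. T i = T0"
    and hcpe: "HCPE m (L + n) T0 T u pb p" and alpha: "\<forall>i<p. \<alpha> i \<noteq> 0"
    and traj: "is_traj n m A B L xb ub"
  shows "\<exists>g. g \<in> carrier_vec (dim_col (hankel_hyb n L \<alpha> T0 T x pb p)) \<and>
    stack n L xb @\<^sub>v stack m L ub = (hankel_hyb n L \<alpha> T0 T x pb p @\<^sub>r hankel_hyb m L \<alpha> T0 T u pb p) *\<^sub>v g"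
proof -
  have carrier: "\<forall>i\<in>{pb..<p}. \<forall>k<T i. x i k \<in> carrier_vec n"
      "\<forall>i\<in>{pb..<p}. \<forall>k<T i. u i k \<in> carrier_vec m"
    using trajs unfolding is_traj_def by auto
  define len :: "nat option \<Rightarrow> nat" where "len = case_option T0 T"
  define Xs where "Xs = case_option (\<lambda>k. vec_lincomb n \<alpha> (\<lambda>i. x i k) {..<pb}) (\<lambda>i k. \<alpha> i \<cdot>\<^sub>v x i k)"
  define Us where "Us = case_option (\<lambda>k. vec_lincomb m \<alpha> (\<lambda>i. u i k) {..<pb}) (\<lambda>i k. \<alpha> i \<cdot>\<^sub>v u i k)"
  have "is_traj n m A B T0 (Xs None) (Us None)"
    unfolding Xs_def Us_def option.case using trajs T0 pb by (intro is_traj_lincomb[OF A B]) auto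
  moreover have "is_traj n m A B (T i) (Xs (Some i)) (Us (Some i))" if "i < p" for i
    unfolding Xs_def Us_def using trajs that is_traj_smult[OF A B] by auto
  ultimately have "\<forall>t\<in>set (None # map Some [pb..<p]). is_traj n m A B (len t) (Xs t) (Us t)"
    unfolding len_def by auto
  moreover have "mat_rank (hankel_mosaic m (L + n) len Us (None # map Some [pb..<p])) = m * (L + n)"
    using hcpe alpha unfolding HCPE_def hankel_hyb_eq_hankel_mosaic[OF carrier(2)] len_def Us_def by blast
  ultimately show ?thesis
    unfolding hankel_hyb_eq_hankel_mosaic[OF carrier(1)] hankel_hyb_eq_hankel_mosaic[OF carrier(2)]
      len_def[symmetric] Xs_def[symmetric] Us_def[symmetric]
    by (intro fundamental_lemma_hankel_mosaic[OF A B ctrl L _ _ traj])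
qed

theorem lemma2:
  fixes A B :: "real mat" and n m p L :: nat and T :: "nat \<Rightarrow> nat"
    and x u :: "nat \<Rightarrow> nat \<Rightarrow> real vec" and \<alpha> :: "nat \<Rightarrow> real"
  assumes A: "A \<in> carrier_mat n n" and B: "B \<in> carrier_mat n m"
    and ctrl: "controllable A B"
    and trajs: "\<forall>i<p. is_traj n m A B (T i) (x i) (u i)"
    and len: "\<forall>i<p. L + n \<le> T i"
    and L: "1 \<le> L"
    and alpha: "\<forall>i<p. \<alpha> i \<noteq> 0"
  shows
    "(\<forall>T0. (\<forall>i<p. T i = T0) \<longrightarrow> CCPE m (L + n) T0 u p \<longrightarrow>
        (\<forall>xb ub. is_traj n m A B L xb ub \<longrightarrow>
          (\<exists>g. g \<in> carrier_vec (T0 + 1 - L) \<and>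
             stack n L xb @\<^sub>v stack m L ub =
             (hankel_cum n L \<alpha> T0 x [0..<p] @\<^sub>r hankel_cum m L \<alpha> T0 u [0..<p]) *\<^sub>v g)))
   \<and> (MCPE m (L + n) T u p \<longrightarrow>
        (\<forall>xb ub. is_traj n m A B L xb ub \<longrightarrow>
          (\<exists>g. g \<in> carrier_vec (dim_col (hankel_mos n L \<alpha> T x [0..<p])) \<and>
             stack n L xb @\<^sub>v stack m L ub =
             (hankel_mos n L \<alpha> T x [0..<p] @\<^sub>r hankel_mos m L \<alpha> T u [0..<p]) *\<^sub>v g)))
   \<and> (\<forall>T0 pb. pb \<le> p \<longrightarrow> (\<forall>i<pb. T i = T0) \<longrightarrow> HCPE m (L + n) T0 T u pb p \<longrightarrow>
        (\<forall>xb ub. is_traj n m A B L xb ub \<longrightarrow>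
          (\<exists>g. g \<in> carrier_vec (dim_col (hankel_hyb n L \<alpha> T0 T x pb p)) \<and>
             stack n L xb @\<^sub>v stack m L ub =
             (hankel_hyb n L \<alpha> T0 T x pb p @\<^sub>r hankel_hyb m L \<alpha> T0 T u pb p) *\<^sub>v g)))"
proof (intro conjI allI impI, goal_cases)
  case (1 T0 xb ub)
  hence "\<forall>i<p. is_traj n m A B T0 (x i) (u i)"
    using trajs by simp
  thus ?case
    using fundamental_lemma_cumulative[OF A B ctrl L _ _ alpha] 1 by blast
next
  case (2 xb ub)
  thus ?case
    using fundamental_lemma_mosaic[OF A B ctrl L trajs _ alpha] by blast
next
  case (3 T0 pb xb ub)
  thus ?case
    using fundamental_lemma_hybrid[OF A B ctrl L trajs _ _ _ alpha] by blast
qed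

end
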